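(* Let $\Gamma\subset\mathbb R^{N-1}$ be a bounded Lipschitz domain and $\Omega_2:=\Gamma\times(0,1)$. The trace map $u\mapsto u|_\Gamma$ (restriction to $z=0$) from $H(\partial_z,\Omega_2)$ to $L^2(\Gamma)$ is well defined, and for all $u\in H(\partial_z,\Omega_2)$: $$\|u\|_{L^2(\Gamma)}\le\sqrt2\big(\|u\|_{L^2(\Omega_2)}+\|\partial_zu\|_{L^2(\Omega_2)}\big),\qquad \|u\|_{L^2(\Omega_2)}\le\sqrt2\big(\|\partial_zu\|_{L^2(\Omega_2)}+\|u\|_{L^2(\Gamma)}\big).$$
   Context: Points of $\Omega_2$ are written $(\tilde x,z)$ with $\tilde x\in\Gamma$, $z\in(0,1)$, and $\Gamma$ is identified with $\Gamma\times\{0\}$. $H(\partial_z,\Omega_2):=\{u\in L^2(\Omega_2):\partial_zu\in L^2(\Omega_2)\}$ (with $\partial_z u$ the distributional derivative in $z$), a Hilbert space with inner product $\langle u,v\rangle:=\int_{\Omega_2}(uv+\partial_zu\,\partial_zv)\,d\tilde x\,dz$. *)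

theory Defs
  imports "HOL-Analysis.Analysis"
begin

definition lipschitz_domain :: "'a::euclidean_space set \<Rightarrow> bool" where
  "lipschitz_domain D \<longleftrightarrow> open D \<and> connected D \<and> D \<noteq> {} \<and>
     (\<forall>x\<in>frontier D. \<exists>e r L f. norm e = 1 \<and> r > 0 \<and>
        L-lipschitz_on {w. w \<bullet> e = 0} f \<and>
        D \<inter> ball x r = {y \<in> ball x r. y \<bullet> e < f (y - (y \<bullet> e) *\<^sub>R e)})"

definition Omega2 :: "'a::euclidean_space set \<Rightarrow> ('a \<times> real) set" where
  "Omega2 G = G \<times> {0<..<1}"

definition in_L2 :: "'b::euclidean_space set \<Rightarrow> ('b \<Rightarrow> real) \<Rightarrow> bool" where
  "in_L2 A f \<longleftrightarrow> (\<lambda>x. indicator A x * f x) \<in> borel_measurable lebesgue \<and>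
                  set_integrable lebesgue A (\<lambda>x. (f x)\<^sup>2)"

definition L2_norm :: "'b::euclidean_space set \<Rightarrow> ('b \<Rightarrow> real) \<Rightarrow> real" where
  "L2_norm A f = sqrt (LINT x:A|lebesgue. (f x)\<^sup>2)"

coinductive smooth_fun :: "('b::euclidean_space \<Rightarrow> real) \<Rightarrow> bool" where
  "(\<forall>x. f differentiable (at x)) \<Longrightarrow>
   (\<forall>v. smooth_fun (\<lambda>x. frechet_derivative f (at x) v)) \<Longrightarrow> smooth_fun f"

definition test_fun :: "'b::euclidean_space set \<Rightarrow> ('b \<Rightarrow> real) \<Rightarrow> bool" where
  "test_fun U \<phi> \<longleftrightarrow> smooth_fun \<phi> \<and> compact (closure {x. \<phi> x \<noteq> 0}) \<and>
                    closure {x. \<phi> x \<noteq> 0} \<subseteq> U"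

definition weak_dz :: "('a::euclidean_space \<times> real) set \<Rightarrow> ('a \<times> real \<Rightarrow> real)
                        \<Rightarrow> ('a \<times> real \<Rightarrow> real) \<Rightarrow> bool" where
  "weak_dz U u g \<longleftrightarrow> (\<forall>\<phi>. test_fun U \<phi> \<longrightarrow>
      (LINT p:U|lebesgue. u p * frechet_derivative \<phi> (at p) (0, 1))
      = - (LINT p:U|lebesgue. g p * \<phi> p))"

definition H_dz :: "'a::euclidean_space set \<Rightarrow> ('a \<times> real \<Rightarrow> real) \<Rightarrow> ('a \<times> real \<Rightarrow> real) \<Rightarrow> bool" where
  "H_dz G u g \<longleftrightarrow> in_L2 (Omega2 G) u \<and> in_L2 (Omega2 G) g \<and> weak_dz (Omega2 G) u g"

definition is_trace :: "'a::euclidean_space set \<Rightarrow> ('a \<times> real \<Rightarrow> real) \<Rightarrow> ('a \<Rightarrow> real) \<Rightarrow> bool" where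
  "is_trace G u t \<longleftrightarrow> (\<exists>v. (AE p in lebesgue. p \<in> Omega2 G \<longrightarrow> v p = u p) \<and>
      (AE x in lebesgue. x \<in> G \<longrightarrow>
          continuous_on {0..<1} (\<lambda>z. v (x, z)) \<and> t x = v (x, 0)))"

end

theory Submission
  imports Defs "HOL-Real_Asymp.Real_Asymp"
begin

(* On almost every vertical line {x} x (0,1) of Omega = G x (0,1), a function u with d_z u = g
   agrees almost everywhere with rep (x, z) = c x + int_0^z g (x, s) ds, where the constant c x is
   fixed by testing u - rep against a smooth probability density on (0,1).  To see this, one shows
   that u - rep integrates to zero against every product of a smooth box bump in x and a smooth
   bump in z: the z-bump minus its mean times the density has a smooth compactly supported
   primitive theta, so the weak identity for the test function (bump in x) * theta applies, while
   rep satisfies the same identity by integration by parts.  The fundamental lemma of the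
   calculus of variations then gives u = rep a.e.; c is a trace, any other trace agrees with it
   since both come from representatives continuous in z, and the estimates follow on each line
   from |c x| <= int |u (x, .)| + int |g (x, .)|, |u (x, z)| <= |c x| + int |g (x, .)|,
   Cauchy-Schwarz on (0,1) and (a + b)^2 <= 2 (a^2 + b^2), integrated over x. *)

section \<open>Smooth bump functions\<close>

definition flat_exp :: "nat \<Rightarrow> real \<Rightarrow> real" where
  "flat_exp k x = (if x > 0 then exp (- 1 / x) / x ^ k else 0)"

lemma flat_exp_has_real_derivative:
  "(flat_exp k has_real_derivative (flat_exp (k + 2) x - real k * flat_exp (k + 1) x)) (at x)"
proof (cases "x > 0")
  case True
  have "((\<lambda>x. exp (- 1 / x) / x ^ k) has_real_derivative
          (flat_exp (k + 2) x - real k * flat_exp (k + 1) x)) (at x)"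
    using True
    by (auto intro!: derivative_eq_intros simp: flat_exp_def)
       (cases k; auto simp: field_simps power_Suc)
  then show ?thesis
    by (rule has_field_derivative_transform_within_open[of _ _ _ "{0<..}"])
       (use True in \<open>auto simp: flat_exp_def\<close>)
next
  case False
  show ?thesis
  proof (cases "x < 0")
    case True
    have "((\<lambda>x. 0) has_real_derivative (flat_exp (k + 2) x - real k * flat_exp (k + 1) x)) (at x)"
      using True by (auto simp: flat_exp_def)
    then show ?thesis
      by (rule has_field_derivative_transform_within_open[of _ _ _ "{..<0}"])
         (use True in \<open>auto simp: flat_exp_def\<close>)
  next
    case False
    with \<open>\<not> x > 0\<close> have x: "x = 0" by auto
    have "((\<lambda>h. (flat_exp k h - flat_exp k 0) / h) \<longlongrightarrow> 0) (at_left 0)"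
      by (rule Lim_transform_eventually[where f="\<lambda>_. 0"])
         (auto simp: eventually_at_left_field flat_exp_def intro!: exI[of _ "-1"])
    moreover have "((\<lambda>h. exp (- 1 / h) / h ^ k / h) \<longlongrightarrow> 0) (at_right (0::real))"
      by real_asymp
    then have "((\<lambda>h. (flat_exp k h - flat_exp k 0) / h) \<longlongrightarrow> 0) (at_right 0)"
      by (rule Lim_transform_eventually)
         (auto simp: eventually_at_right_field flat_exp_def intro!: exI[of _ 1])
    ultimately have "((\<lambda>h. (flat_exp k h - flat_exp k 0) / h) \<longlongrightarrow> 0) (at 0)"
      by (simp add: filterlim_split_at_real)
    then show ?thesis
      unfolding x has_field_derivative_iff by (simp add: flat_exp_def)
  qed
qed

inductive flat_exp_alg :: "(real \<Rightarrow> real) \<Rightarrow> bool" where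
  flat: "flat_exp_alg (\<lambda>x. flat_exp k (a * x + b))"
| const: "flat_exp_alg (\<lambda>x. c)"
| add: "flat_exp_alg f \<Longrightarrow> flat_exp_alg g \<Longrightarrow> flat_exp_alg (\<lambda>x. f x + g x)"
| mult: "flat_exp_alg f \<Longrightarrow> flat_exp_alg g \<Longrightarrow> flat_exp_alg (\<lambda>x. f x * g x)"

lemma flat_exp_alg_has_real_derivative:
  "flat_exp_alg f \<Longrightarrow> \<exists>f'. flat_exp_alg f' \<and> (\<forall>x. (f has_real_derivative f' x) (at x))"
proof (induction rule: flat_exp_alg.induct)
  case (flat k a b)
  let ?f' = "\<lambda>x. (flat_exp (k + 2) (a * x + b) + (- real k) * flat_exp (k + 1) (a * x + b)) * a"
  have "((\<lambda>x. flat_exp k (a * x + b)) has_real_derivative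
          (flat_exp (k + 2) (a * x + b) - real k * flat_exp (k + 1) (a * x + b)) * a) (at x)" for x
    by (rule DERIV_chain2[where f="flat_exp k", OF flat_exp_has_real_derivative])
       (auto intro!: derivative_eq_intros)
  then have "((\<lambda>x. flat_exp k (a * x + b)) has_real_derivative ?f' x) (at x)" for x
    by simp
  moreover have "flat_exp_alg ?f'" by (intro flat_exp_alg.intros)
  ultimately show ?case by blast
next
  case const
  show ?case by (rule exI[of _ "\<lambda>x. 0"]) (auto intro: flat_exp_alg.intros)
next
  case (add f g)
  then obtain f' g' where "flat_exp_alg f'" "flat_exp_alg g'"
    "\<And>x. (f has_real_derivative f' x) (at x)" "\<And>x. (g has_real_derivative g' x) (at x)"
    by blast
  then show ?case
    by (intro exI[of _ "\<lambda>x. f' x + g' x"]) (auto intro: flat_exp_alg.intros derivative_intros)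
next
  case (mult f g)
  then obtain f' g' where "flat_exp_alg f'" "flat_exp_alg g'"
    "\<And>x. (f has_real_derivative f' x) (at x)" "\<And>x. (g has_real_derivative g' x) (at x)"
    by blast
  with mult.hyps show ?case
    by (intro exI[of _ "\<lambda>x. f' x * g x + f x * g' x"])
       (auto intro!: flat_exp_alg.intros derivative_eq_intros)
qed

definition real_smooth :: "(real \<Rightarrow> real) \<Rightarrow> bool" where
  "real_smooth f \<longleftrightarrow> (\<exists>D. D 0 = f \<and> (\<forall>n x. (D n has_real_derivative D (Suc n) x) (at x)))"

lemma flat_exp_alg_real_smooth:
  assumes "flat_exp_alg f" shows "real_smooth f"
proof -
  define deriv_of where
    "deriv_of f = (SOME f'. flat_exp_alg f' \<and> (\<forall>x. (f has_real_derivative f' x) (at x)))" for f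
  have deriv_of: "flat_exp_alg (deriv_of f) \<and> (\<forall>x. (f has_real_derivative deriv_of f x) (at x))"
    if "flat_exp_alg f" for f
    using someI_ex[OF flat_exp_alg_has_real_derivative[OF that]] unfolding deriv_of_def .
  have alg: "flat_exp_alg ((deriv_of ^^ n) f)" for n
    by (induction n) (auto simp: assms deriv_of)
  show ?thesis unfolding real_smooth_def
    by (rule exI[of _ "\<lambda>n. (deriv_of ^^ n) f"]) (simp add: deriv_of[OF alg])
qed

lemma real_smooth_has_real_derivative:
  assumes "real_smooth f" shows "\<exists>f'. real_smooth f' \<and> (\<forall>x. (f has_real_derivative f' x) (at x))"
proof -
  obtain D where D: "D 0 = f" "\<And>n x. (D n has_real_derivative D (Suc n) x) (at x)"
    using assms unfolding real_smooth_def by blast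
  have "real_smooth (D 1)" unfolding real_smooth_def
    by (rule exI[of _ "\<lambda>n. D (Suc n)"]) (auto simp: D)
  then show ?thesis using D by (intro exI[of _ "D 1"]) auto
qed

lemma real_smooth_continuous: "real_smooth f \<Longrightarrow> continuous_on UNIV f"
  by (meson DERIV_isCont continuous_at_imp_continuous_on real_smooth_has_real_derivative)

lemma flat_exp_alg_continuous: "flat_exp_alg f \<Longrightarrow> continuous_on UNIV f"
  using flat_exp_alg_real_smooth real_smooth_continuous by blast

lemma has_real_derivative_integral_from:
  fixes h :: "real \<Rightarrow> real"
  assumes c: "continuous_on UNIV h" and below: "\<And>t. t \<le> m \<Longrightarrow> h t = 0"
  shows "((\<lambda>z. integral {m..z} h) has_real_derivative h z) (at z)"
proof -
  define a where "a = min z m - 1"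
  have vanish: "integral {s..t} h = 0" if "t \<le> m" for s t
    using integral_cong[of "{s..t}" h "\<lambda>_. 0"] below that by simp
  have shift: "integral {m..y} h = integral {a..y} h" for y
  proof (cases "m \<le> y")
    case True
    have "a \<le> m" by (simp add: a_def)
    from Henstock_Kurzweil_Integration.integral_combine[OF this True
        integrable_continuous_real[OF continuous_on_subset[OF c]]]
    show ?thesis using vanish[of m a] by simp
  qed (simp add: vanish)
  have "((\<lambda>z. integral {a..z} h) has_real_derivative h z) (at z within {a..z + 1})"
    by (rule integral_has_real_derivative[OF continuous_on_subset[OF c]]) (auto simp: a_def)
  moreover have "at z within {a..z + 1} = at z"
    by (rule at_within_interior) (auto simp: a_def)
  ultimately show ?thesis by (simp add: shift)
qed

lemma real_smooth_primitive:
  fixes h :: "real \<Rightarrow> real"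
  assumes h: "real_smooth h" and supp: "\<And>t. h t \<noteq> 0 \<Longrightarrow> m < t \<and> t < M"
    and int0: "integral {m..M} h = 0"
  defines "\<theta> \<equiv> \<lambda>z. integral {m..z} h"
  shows "real_smooth \<theta>" "\<And>z. (\<theta> has_real_derivative h z) (at z)"
    "\<And>z. z \<le> m \<Longrightarrow> \<theta> z = 0" "\<And>z. M \<le> z \<Longrightarrow> \<theta> z = 0"
proof -
  have c: "continuous_on UNIV h" using real_smooth_continuous[OF h] .
  have vanish: "integral {a..b} h = 0" if "\<And>t. t \<in> {a..b} \<Longrightarrow> h t = 0" for a b
    using integral_cong[of "{a..b}" h "\<lambda>_. 0", OF that] by simp
  show deriv: "(\<theta> has_real_derivative h z) (at z)" for z
    unfolding \<theta>_def by (rule has_real_derivative_integral_from[OF c]) (use supp in force)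
  show "\<theta> z = 0" if "z \<le> m" for z
    unfolding \<theta>_def using that by (intro vanish) (use supp in force)
  show "\<theta> z = 0" if "M \<le> z" for z
  proof (cases "m \<le> M")
    case True
    have "integral {m..z} h = integral {m..M} h + integral {M..z} h"
      using Henstock_Kurzweil_Integration.integral_combine[OF True that
          integrable_continuous_real[OF continuous_on_subset[OF c]]] by simp
    moreover have "integral {M..z} h = 0" by (intro vanish) (use supp in force)
    ultimately show ?thesis using int0 by (simp add: \<theta>_def)
  next
    case False
    have "integral {m..z} h = 0" by (intro vanish) (use supp False in force)
    then show ?thesis by (simp add: \<theta>_def)
  qed
  obtain D where D: "D 0 = h" "\<And>n x. (D n has_real_derivative D (Suc n) x) (at x)"
    using h unfolding real_smooth_def by blast
  show "real_smooth \<theta>" unfolding real_smooth_def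
    by (rule exI[of _ "case_nat \<theta> D"]) (auto simp: D deriv split: nat.split)
qed

inductive ridge_alg :: "('b::euclidean_space \<Rightarrow> real) \<Rightarrow> bool" where
  ridge: "real_smooth \<psi> \<Longrightarrow> ridge_alg (\<lambda>p. \<psi> (p \<bullet> c))"
| const: "ridge_alg (\<lambda>x. c)"
| add: "ridge_alg f \<Longrightarrow> ridge_alg g \<Longrightarrow> ridge_alg (\<lambda>x. f x + g x)"
| mult: "ridge_alg f \<Longrightarrow> ridge_alg g \<Longrightarrow> ridge_alg (\<lambda>x. f x * g x)"

lemma ridge_alg_has_derivative:
  "ridge_alg f \<Longrightarrow> \<exists>D. (\<forall>x. (f has_derivative D x) (at x)) \<and> (\<forall>v. ridge_alg (\<lambda>x. D x v))"
proof (induction rule: ridge_alg.induct)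
  case (ridge \<psi> c)
  then obtain \<psi>' where s: "real_smooth \<psi>'" and d: "\<And>x. (\<psi> has_real_derivative \<psi>' x) (at x)"
    using real_smooth_has_real_derivative by blast
  have "((\<lambda>p. \<psi> (p \<bullet> c)) has_derivative (\<lambda>h. \<psi>' (x \<bullet> c) * (h \<bullet> c))) (at x)" for x
  proof -
    have "((\<lambda>p. p \<bullet> c) has_derivative (\<lambda>h. h \<bullet> c)) (at x)"
      by (auto intro!: derivative_eq_intros)
    from has_derivative_compose[OF this d[of "x \<bullet> c", unfolded has_field_derivative_def]]
    show ?thesis by simp
  qed
  moreover have "ridge_alg (\<lambda>x. \<psi>' (x \<bullet> c) * (v \<bullet> c))" for v
    by (intro ridge_alg.intros s)
  ultimately show ?case by (intro exI[of _ "\<lambda>x h. \<psi>' (x \<bullet> c) * (h \<bullet> c)"]) auto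
next
  case (const c)
  show ?case by (rule exI[of _ "\<lambda>x h. 0"]) (auto intro: ridge_alg.intros)
next
  case (add f g)
  then obtain Df Dg where "\<And>x. (f has_derivative Df x) (at x)" "\<And>v. ridge_alg (\<lambda>x. Df x v)"
    "\<And>x. (g has_derivative Dg x) (at x)" "\<And>v. ridge_alg (\<lambda>x. Dg x v)" by blast
  then show ?case
    by (intro exI[of _ "\<lambda>x h. Df x h + Dg x h"]) (auto intro: ridge_alg.intros derivative_intros)
next
  case (mult f g)
  then obtain Df Dg where "\<And>x. (f has_derivative Df x) (at x)" "\<And>v. ridge_alg (\<lambda>x. Df x v)"
    "\<And>x. (g has_derivative Dg x) (at x)" "\<And>v. ridge_alg (\<lambda>x. Dg x v)" by blast
  with mult.hyps show ?case
    by (intro exI[of _ "\<lambda>x h. f x * Dg x h + Df x h * g x"])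
       (auto intro!: ridge_alg.intros derivative_intros)
qed

lemma ridge_alg_differentiable: "ridge_alg f \<Longrightarrow> f differentiable (at x)"
  using ridge_alg_has_derivative differentiable_def by blast

lemma ridge_alg_smooth_fun: "ridge_alg f \<Longrightarrow> smooth_fun f"
proof (coinduction arbitrary: f rule: smooth_fun.coinduct)
  case (smooth_fun f)
  then obtain D where D: "\<And>x. (f has_derivative D x) (at x)" "\<And>v. ridge_alg (\<lambda>x. D x v)"
    using ridge_alg_has_derivative by blast
  then have "frechet_derivative f (at x) = D x" for x
    using frechet_derivative_at by metis
  with D show ?case by (auto simp: differentiable_def)
qed

lemma ridge_alg_prod:
  "finite I \<Longrightarrow> (\<And>i. i \<in> I \<Longrightarrow> ridge_alg (f i)) \<Longrightarrow> ridge_alg (\<lambda>x. \<Prod>i\<in>I. f i x)"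
  by (induction I rule: finite_induct) (auto intro: ridge_alg.intros)

lemma smooth_fun_continuous: "smooth_fun f \<Longrightarrow> continuous_on UNIV f"
  by (metis continuous_at_imp_continuous_on differentiable_imp_continuous_within smooth_fun.cases)

lemma smooth_fun_directional_derivative:
  "smooth_fun f \<Longrightarrow> smooth_fun (\<lambda>x. frechet_derivative f (at x) v)"
  by (metis smooth_fun.cases)

lemma frechet_derivative_eq_directional:
  fixes f :: "'b::euclidean_space \<Rightarrow> real"
  assumes "f differentiable (at p)"
    and d: "((\<lambda>t. f (p + t *\<^sub>R v)) has_real_derivative d) (at 0)"
  shows "frechet_derivative f (at p) v = d"
proof -
  let ?D = "frechet_derivative f (at p)"
  have "(f has_derivative ?D) (at p)"
    using assms(1) frechet_derivative_works by blast
  then have D: "(f has_derivative ?D) (at (p + 0 *\<^sub>R v))" by simp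
  have "((\<lambda>t::real. p + t *\<^sub>R v) has_derivative (\<lambda>t. t *\<^sub>R v)) (at 0)"
    by (auto intro!: derivative_eq_intros)
  from has_derivative_compose[OF this D]
  have "((\<lambda>t. f (p + t *\<^sub>R v)) has_derivative (\<lambda>t. ?D (t *\<^sub>R v))) (at 0)" .
  moreover have "(\<lambda>t. ?D (t *\<^sub>R v)) = (\<lambda>t. ?D v * t)"
    using linear_scale[OF has_derivative_linear[OF D]] by (simp add: fun_eq_iff mult.commute)
  ultimately have "((\<lambda>t. f (p + t *\<^sub>R v)) has_real_derivative ?D v) (at 0)"
    by (simp add: has_field_derivative_def)
  then show ?thesis using d DERIV_unique by blast
qed

definition bump :: "nat \<Rightarrow> real \<Rightarrow> real \<Rightarrow> real \<Rightarrow> real" where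
  "bump n a b t = flat_exp 0 ((real n + 1) * (t - a)) * flat_exp 0 ((real n + 1) * (b - t))"

lemma bump_flat_exp_alg: "flat_exp_alg (bump n a b)"
proof -
  have "bump n a b = (\<lambda>t. flat_exp 0 ((real n + 1) * t + - (real n + 1) * a)
      * flat_exp 0 ((- (real n + 1)) * t + (real n + 1) * b))"
    by (simp add: bump_def fun_eq_iff algebra_simps)
  then show ?thesis by (simp add: flat_exp_alg.intros)
qed

lemma bump_continuous: "continuous_on UNIV (bump n a b)"
  by (rule flat_exp_alg_continuous[OF bump_flat_exp_alg])

lemma bump_borel_measurable [measurable]: "bump n a b \<in> borel_measurable borel"
  by (rule borel_measurable_continuous_onI[OF bump_continuous])

lemma bump_nonneg: "0 \<le> bump n a b t" and bump_le_1: "bump n a b t \<le> 1"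
  by (auto simp: bump_def flat_exp_def intro: mult_le_one)

lemma bump_nonzero_imp: "bump n a b t \<noteq> 0 \<Longrightarrow> a < t \<and> t < b"
  by (auto simp: bump_def flat_exp_def zero_less_mult_iff split: if_splits)

lemma bump_tendsto_indicator: "(\<lambda>n. bump n a b t) \<longlonglongrightarrow> indicator {a<..<b} t"
proof (cases "a < t \<and> t < b")
  case True
  have lim: "(\<lambda>n. exp (- 1 / ((real n + 1) * d))) \<longlonglongrightarrow> 1" if "d > 0" for d :: real
  proof -
    have "(\<lambda>n. - 1 / ((real n + 1) * d)) \<longlonglongrightarrow> 0"
      using that by real_asymp
    from tendsto_exp[OF this] show ?thesis by simp
  qed
  have "bump n a b t = exp (- 1 / ((real n + 1) * (t - a))) * exp (- 1 / ((real n + 1) * (b - t)))"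
    for n using True by (simp add: bump_def flat_exp_def)
  then show ?thesis using True tendsto_mult[OF lim lim, of "t - a" "b - t"] by simp
next
  case False
  then have "bump n a b t = 0" for n using bump_nonzero_imp by blast
  then show ?thesis using False by simp
qed

definition box_bump :: "nat \<Rightarrow> 'a::euclidean_space \<Rightarrow> 'a \<Rightarrow> 'a \<Rightarrow> real" where
  "box_bump n a b x = (\<Prod>i\<in>Basis. bump n (a \<bullet> i) (b \<bullet> i) (x \<bullet> i))"

lemma box_bump_abs_le_1: "\<bar>box_bump n a b x\<bar> \<le> 1"
  unfolding box_bump_def using bump_nonneg bump_le_1
  by (auto simp: prod_nonneg intro: prod_le_1)

lemma box_bump_nonzero_imp: "box_bump n a b x \<noteq> 0 \<Longrightarrow> x \<in> box a b"
  unfolding box_bump_def mem_box using bump_nonzero_imp by (auto simp: prod_zero_iff)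

lemma box_bump_tendsto_indicator: "(\<lambda>n. box_bump n a b x) \<longlonglongrightarrow> indicator (box a b) x"
proof -
  have "(\<lambda>n. box_bump n a b x) \<longlonglongrightarrow> (\<Prod>i\<in>Basis. indicator {a \<bullet> i<..<b \<bullet> i} (x \<bullet> i))"
    unfolding box_bump_def by (intro tendsto_prod bump_tendsto_indicator)
  moreover have "(\<Prod>i\<in>Basis. indicator {a \<bullet> i<..<b \<bullet> i} (x \<bullet> i) :: real) = indicator (box a b) x"
    by (auto simp: indicator_def mem_box prod_zero_iff)
  ultimately show ?thesis by simp
qed

lemma box_bump_borel_measurable [measurable]: "box_bump n a b \<in> borel_measurable borel"
  unfolding box_bump_def by measurable

lemma test_fun_box_bump_times:
  fixes a b :: "'a::euclidean_space" and n :: nat and S :: "('a \<times> real) set"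
  assumes \<theta>: "real_smooth \<theta>" and \<theta>': "\<And>z. (\<theta> has_real_derivative \<theta>' z) (at z)"
    and supp: "\<And>z. \<theta> z \<noteq> 0 \<Longrightarrow> m < z \<and> z < M" and sub: "cbox a b \<times> {m..M} \<subseteq> S"
  defines "\<phi> \<equiv> \<lambda>p. box_bump n a b (fst p) * \<theta> (snd p)"
  shows "test_fun S \<phi>"
    and "\<And>p. frechet_derivative \<phi> (at p) (0, 1) = box_bump n a b (fst p) * \<theta>' (snd p)"
proof -
  have "\<phi> = (\<lambda>p. (\<Prod>i\<in>Basis. bump n (a \<bullet> i) (b \<bullet> i) (p \<bullet> (i, 0))) * \<theta> (p \<bullet> (0, 1)))"
    unfolding \<phi>_def box_bump_def by (auto simp: fun_eq_iff inner_Pair_0)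
  moreover have "ridge_alg (\<lambda>p::'a \<times> real. (\<Prod>i\<in>Basis. bump n (a \<bullet> i) (b \<bullet> i) (p \<bullet> (i, 0))) * \<theta> (p \<bullet> (0, 1)))"
    by (intro ridge_alg.mult ridge_alg_prod ridge_alg.ridge flat_exp_alg_real_smooth
        bump_flat_exp_alg \<theta>) simp
  ultimately have ridge: "ridge_alg \<phi>" by simp
  have "{p. \<phi> p \<noteq> 0} \<subseteq> cbox a b \<times> {m..M}"
    using box_bump_nonzero_imp supp box_subset_cbox by (fastforce simp: \<phi>_def)
  then have cl: "closure {p. \<phi> p \<noteq> 0} \<subseteq> cbox a b \<times> {m..M}"
    by (rule closure_minimal) (intro closed_Times closed_cbox closed_atLeastAtMost)
  moreover have "compact (cbox a b \<times> {m..M})"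
    by (intro compact_Times compact_cbox compact_Icc)
  ultimately have "compact (closure {p. \<phi> p \<noteq> 0})"
    using compact_Int_closed[of "cbox a b \<times> {m..M}" "closure {p. \<phi> p \<noteq> 0}"]
    by (simp add: inf.absorb2)
  then show "test_fun S \<phi>"
    unfolding test_fun_def using ridge_alg_smooth_fun[OF ridge] cl sub by blast
  fix p :: "'a \<times> real"
  have "((\<lambda>t. \<theta> (snd p + t)) has_real_derivative \<theta>' (snd p + 0) * 1) (at 0)"
    by (rule DERIV_chain2[OF \<theta>']) (auto intro!: derivative_eq_intros)
  then have "((\<lambda>t. \<phi> (p + t *\<^sub>R (0, 1))) has_real_derivative box_bump n a b (fst p) * \<theta>' (snd p)) (at 0)"
    by (auto simp: \<phi>_def intro: DERIV_cmult)
  then show "frechet_derivative \<phi> (at p) (0, 1) = box_bump n a b (fst p) * \<theta>' (snd p)"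
    by (rule frechet_derivative_eq_directional[OF ridge_alg_differentiable[OF ridge]])
qed

section \<open>Functions with vanishing box integrals\<close>

lemma emeasure_density_eq_integral_pos_part:
  fixes f :: "'b \<Rightarrow> real"
  assumes f: "integrable M f" and A[measurable]: "A \<in> sets M"
  shows "emeasure (density M (\<lambda>x. ennreal (f x))) A = ennreal (\<integral>x. indicator A x * max (f x) 0 \<partial>M)"
proof -
  have [measurable]: "f \<in> borel_measurable M" using f by auto
  have "emeasure (density M (\<lambda>x. ennreal (f x))) A = (\<integral>\<^sup>+x. ennreal (f x) * indicator A x \<partial>M)"
    using A by (simp add: emeasure_density)
  also have "\<dots> = (\<integral>\<^sup>+x. ennreal (indicator A x * max (f x) 0) \<partial>M)"
    by (intro nn_integral_cong) (auto simp: indicator_def max_def ennreal_neg)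
  also have "\<dots> = ennreal (\<integral>x. indicator A x * max (f x) 0 \<partial>M)"
  proof (rule nn_integral_eq_integral)
    show "integrable M (\<lambda>x. indicator A x * max (f x) 0)"
      by (rule Bochner_Integration.integrable_bound[OF f]) (auto simp: indicator_def)
  qed simp
  finally show ?thesis .
qed

lemma UN_box_eq_UNIV: "(\<Union>i::nat. box (- real i *\<^sub>R One) (real i *\<^sub>R One)) = (UNIV :: 'b::euclidean_space set)"
proof -
  have *: "x \<in> box (- real n *\<^sub>R One) (real n *\<^sub>R One)" if "norm x < real n" for x :: 'b and n
  proof -
    have "- real n < x \<bullet> i \<and> x \<bullet> i < real n" if "i \<in> Basis" for i
      using Basis_le_norm[OF that, of x] \<open>norm x < real n\<close> by (simp add: abs_le_iff)
    then show ?thesis unfolding mem_box by simp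
  qed
  show ?thesis
  proof (intro set_eqI iffI)
    fix x :: 'b
    obtain n where "norm x < real n" using reals_Archimedean2 by blast
    then show "x \<in> (\<Union>i::nat. box (- real i *\<^sub>R One) (real i *\<^sub>R One))" using * by blast
  qed simp
qed

lemma AE_zero_if_box_integrals_zero:
  fixes f :: "'b::euclidean_space \<Rightarrow> real"
  assumes f: "integrable lborel f"
    and zero: "\<And>a b. (\<integral>x. indicator (box a b) x * f x \<partial>lborel) = 0"
  shows "AE x in lborel. f x = 0"
proof -
  have [measurable]: "f \<in> borel_measurable lborel" using f by auto
  define M where "M = density lborel (\<lambda>x. ennreal (f x))"
  define N where "N = density lborel (\<lambda>x. ennreal (- f x))"
  have boxes: "emeasure M (box a b) = emeasure N (box a b) \<and> emeasure N (box a b) \<noteq> \<infinity>" for a b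
  proof -
    have "integrable lborel (\<lambda>x. indicator (box a b) x * max (f x) 0)"
      "integrable lborel (\<lambda>x. indicator (box a b) x * max (- f x) 0)"
      by (rule Bochner_Integration.integrable_bound[OF f]; auto simp: indicator_def)+
    then have "(\<integral>x. indicator (box a b) x * max (f x) 0 \<partial>lborel)
        - (\<integral>x. indicator (box a b) x * max (- f x) 0 \<partial>lborel)
        = (\<integral>x. indicator (box a b) x * max (f x) 0 - indicator (box a b) x * max (- f x) 0 \<partial>lborel)"
      by simp
    also have "\<dots> = (\<integral>x. indicator (box a b) x * f x \<partial>lborel)"
      by (rule Bochner_Integration.integral_cong) (auto simp: indicator_def max_def)
    finally show ?thesis
      using zero emeasure_density_eq_integral_pos_part[OF f, of "box a b"]
        emeasure_density_eq_integral_pos_part[of lborel "\<lambda>x. - f x" "box a b"] f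
      by (simp add: M_def N_def)
  qed
  have "M = N"
  proof (rule measure_eqI_generator_eq[where E="range (\<lambda>(a, b). box a b)" and \<Omega>=UNIV
        and A="\<lambda>i. box (- real i *\<^sub>R One) (real i *\<^sub>R One)"])
    show "Int_stable (range (\<lambda>(a, b). box a b :: 'b set))"
      by (auto simp: Int_stable_def box_Int_box)
    show "sets M = sigma_sets UNIV (range (\<lambda>(a, b). box a b))"
      "sets N = sigma_sets UNIV (range (\<lambda>(a, b). box a b))"
      by (simp_all add: M_def N_def borel_eq_box)
  qed (use boxes UN_box_eq_UNIV in auto)
  then have "AE x in lborel. ennreal (f x) = ennreal (- f x)"
    by (intro sigma_finite_measure.density_unique[OF sigma_finite_lborel]) (auto simp: M_def N_def)
  then show ?thesis
  proof eventually_elim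
    case (elim x)
    then show ?case
      by (cases "f x" "0::real" rule: linorder_cases) (auto simp: ennreal_neg)
  qed
qed

lemma AE_zero_on_open_if_box_integrals_zero:
  fixes f :: "'b::euclidean_space \<Rightarrow> real"
  assumes f: "integrable lborel f" and S: "open S"
    and zero: "\<And>a b. cbox a b \<subseteq> S \<Longrightarrow> (\<integral>x. indicator (box a b) x * f x \<partial>lborel) = 0"
  shows "AE x in lborel. x \<in> S \<longrightarrow> f x = 0"
proof -
  have [measurable]: "f \<in> borel_measurable lborel" using f by auto
  obtain D where D: "countable D" "D \<subseteq> Pow S" "\<And>X. X \<in> D \<Longrightarrow> \<exists>a b. X = cbox a b" "\<Union>D = S"
    using open_countable_Union_open_cbox[OF S] by metis
  have "AE x in lborel. x \<in> cbox a0 b0 \<longrightarrow> f x = 0" if sub: "cbox a0 b0 \<subseteq> S" for a0 b0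
  proof -
    have "AE x in lborel. indicator (box a0 b0) x * f x = 0"
    proof (rule AE_zero_if_box_integrals_zero)
      show "integrable lborel (\<lambda>x. indicator (box a0 b0) x * f x)"
        by (rule Bochner_Integration.integrable_bound[OF f]) (auto simp: indicator_def)
      fix a b :: 'b
      obtain a' b' where ab': "box a b \<inter> box a0 b0 = box a' b'" using box_Int_box by blast
      have "cbox a' b' \<subseteq> S" if "box a' b' \<noteq> {}"
      proof -
        have "closure (box a' b') \<subseteq> cbox a0 b0"
          using ab' box_subset_cbox by (intro closure_minimal) auto
        then show ?thesis using closure_box[OF that] sub by auto
      qed
      then have "(\<integral>x. indicator (box a' b') x * f x \<partial>lborel) = 0"
        using zero by (cases "box a' b' = {}") auto
      moreover have "(\<lambda>x. indicator (box a b) x * (indicator (box a0 b0) x * f x))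
          = (\<lambda>x. indicator (box a' b') x * f x)"
        using ab' by (auto simp: indicator_def fun_eq_iff)
      ultimately show "(\<integral>x. indicator (box a b) x * (indicator (box a0 b0) x * f x) \<partial>lborel) = 0"
        by simp
    qed
    moreover have "AE x in lborel. x \<notin> cbox a0 b0 - box a0 b0"
      by (rule AE_not_in[OF null_sets_cbox_Diff_box])
    ultimately show ?thesis by eventually_elim (auto simp: indicator_def)
  qed
  then have "AE x in lborel. \<forall>X\<in>D. x \<in> X \<longrightarrow> f x = 0"
    using D(2,3) by (subst AE_ball_countable[OF D(1)]) blast
  then show ?thesis by eventually_elim (use D(4) in auto)
qed

section \<open>Integrals along lines\<close>

lemma has_integral_eq_lborel_integral:
  fixes h :: "real \<Rightarrow> real"
  assumes "continuous_on UNIV h" and "\<And>t. t \<notin> {a..b} \<Longrightarrow> h t = 0"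
  shows "integrable lborel h" "integral {a..b} h = (\<integral>t. h t \<partial>lborel)"
proof -
  have si: "set_integrable lborel {a..b} h"
    by (rule borel_integrable_atLeastAtMost') (use assms(1) continuous_on_subset in blast)
  have eq: "(\<lambda>t. indicator {a..b} t *\<^sub>R h t) = h"
    using assms(2) by (auto simp: indicator_def fun_eq_iff)
  show "integrable lborel h" using si unfolding set_integrable_def eq .
  show "integral {a..b} h = (\<integral>t. h t \<partial>lborel)"
    using set_borel_integral_eq_integral(2)[OF si] unfolding set_lebesgue_integral_def eq by simp
qed

lemma integrable_pair_mult:
  fixes a :: "'x::euclidean_space \<Rightarrow> real" and b :: "'y::euclidean_space \<Rightarrow> real"
  assumes a: "integrable lborel a" and b: "integrable lborel b"
  shows "integrable (lborel \<Otimes>\<^sub>M lborel) (\<lambda>p. a (fst p) * b (snd p))"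
proof (rule lborel_pair.Fubini_integrable)
  have [measurable]: "a \<in> borel_measurable lborel" "b \<in> borel_measurable lborel" using a b by auto
  show "(\<lambda>p. a (fst p) * b (snd p)) \<in> borel_measurable (lborel \<Otimes>\<^sub>M lborel)" by measurable
  have "integrable lborel (\<lambda>x. norm (a x) * (\<integral>y. norm (b y) \<partial>lborel))"
    using a by (intro integrable_mult_left) auto
  then show "integrable lborel (\<lambda>x. \<integral>y. norm (a (fst (x, y)) * b (snd (x, y))) \<partial>lborel)"
    by (simp add: abs_mult)
  show "AE x in lborel. integrable lborel (\<lambda>y. a (fst (x, y)) * b (snd (x, y)))"
    using b by simp
qed

lemma integrable_mult_bounded:
  fixes f q :: "'x \<Rightarrow> real"
  assumes f: "integrable M f" and q: "q \<in> borel_measurable M" and K: "\<And>x. \<bar>q x\<bar> \<le> K"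
  shows "integrable M (\<lambda>x. f x * q x)"
proof (rule Bochner_Integration.integrable_bound[where f="\<lambda>x. K * \<bar>f x\<bar>"])
  show "integrable M (\<lambda>x. K * \<bar>f x\<bar>)" using f by auto
  show "(\<lambda>x. f x * q x) \<in> borel_measurable M" using f q by auto
  show "AE x in M. norm (f x * q x) \<le> norm (K * \<bar>f x\<bar>)"
  proof (intro AE_I2)
    fix x
    have "\<bar>f x\<bar> * \<bar>q x\<bar> \<le> \<bar>f x\<bar> * K" by (rule mult_left_mono[OF K]) simp
    moreover have "0 \<le> K" using K[of x] by linarith
    ultimately show "norm (f x * q x) \<le> norm (K * \<bar>f x\<bar>)" by (simp add: abs_mult mult.commute)
  qed
qed

lemma continuous_on_compact_abs_bound:
  fixes f :: "'x::topological_space \<Rightarrow> real"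
  assumes "continuous_on S f" and "compact S"
  obtains K where "\<And>t. t \<in> S \<Longrightarrow> \<bar>f t\<bar> \<le> K"
  using compact_imp_bounded[OF compact_continuous_image[OF assms]]
  by (metis bounded_iff image_eqI real_norm_def)

lemma continuous_vanishing_outside_abs_bound:
  fixes f :: "real \<Rightarrow> real"
  assumes "continuous_on UNIV f" and "\<And>t. t \<notin> {a..b} \<Longrightarrow> f t = 0"
  obtains K where "\<And>t. \<bar>f t\<bar> \<le> K"
proof -
  obtain K where K: "\<And>t. t \<in> {a..b} \<Longrightarrow> \<bar>f t\<bar> \<le> K"
    using continuous_on_compact_abs_bound[OF continuous_on_subset[OF assms(1)] compact_Icc] by blast
  have "\<bar>f t\<bar> \<le> max K 0" for t
  proof (cases "t \<in> {a..b}")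
    case True
    then show ?thesis using K[OF True] by linarith
  qed (simp add: assms(2))
  then show ?thesis by (rule that)
qed

lemma integral_Ioo_deriv:
  fixes \<theta> \<theta>' :: "real \<Rightarrow> real"
  assumes "\<And>z. (\<theta> has_real_derivative \<theta>' z) (at z)" and "continuous_on UNIV \<theta>'" and "s \<le> t"
  shows "(\<integral>z. indicator {s<..<t} z * \<theta>' z \<partial>lborel) = \<theta> t - \<theta> s"
proof -
  have "(LBINT z=s..t. \<theta>' z) = \<theta> t - \<theta> s"
    using assms
    by (intro interval_integral_FTC_finite continuous_on_subset[OF assms(2)])
       (auto intro: has_field_derivative_at_within
        simp: has_real_derivative_iff_has_vector_derivative[symmetric])
  then show ?thesis using assms(3) by (simp add: interval_integral_Ioo set_lebesgue_integral_def)
qed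

lemma integrable_triangle_kernel:
  fixes g \<theta>' :: "real \<Rightarrow> real"
  assumes g: "integrable lborel g" and cont: "continuous_on UNIV \<theta>'"
  shows "integrable (lborel \<Otimes>\<^sub>M lborel) (\<lambda>p::real \<times> real.
    if 0 < fst p \<and> fst p < 1 \<and> 0 \<le> snd p \<and> snd p < fst p then g (snd p) * \<theta>' (fst p) else 0)"
proof -
  have [measurable]: "g \<in> borel_measurable borel" using g by auto
  have [measurable]: "\<theta>' \<in> borel_measurable borel"
    using cont by (simp add: borel_measurable_continuous_onI)
  obtain B where B: "\<And>z. z \<in> {0..1} \<Longrightarrow> \<bar>\<theta>' z\<bar> \<le> B"
    using continuous_on_compact_abs_bound[OF continuous_on_subset[OF cont] compact_Icc] by blast
  show ?thesis
  proof (rule Bochner_Integration.integrable_bound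
      [OF integrable_pair_mult[of "\<lambda>z. indicator {0..1} z * B" "\<lambda>s. \<bar>g s\<bar>"]])
    show "integrable lborel (\<lambda>z::real. indicator {0..1} z * B)"
      by (intro integrable_mult_left) (auto simp: integrable_indicator_iff)
    show "integrable lborel (\<lambda>s. \<bar>g s\<bar>)" using g by auto
    show "AE p in lborel \<Otimes>\<^sub>M lborel.
        norm (if 0 < fst p \<and> fst p < 1 \<and> 0 \<le> snd p \<and> snd p < fst p then g (snd p) * \<theta>' (fst p) else 0)
        \<le> norm (indicator {0..1} (fst p) * B * \<bar>g (snd p)\<bar>)"
    proof (intro AE_I2)
      fix p :: "real \<times> real"
      show "norm (if 0 < fst p \<and> fst p < 1 \<and> 0 \<le> snd p \<and> snd p < fst p then g (snd p) * \<theta>' (fst p) else 0)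
          \<le> norm (indicator {0..1} (fst p) * B * \<bar>g (snd p)\<bar>)"
      proof (cases "fst p \<in> {0<..<1}")
        case True
        then have "\<bar>\<theta>' (fst p)\<bar> \<le> B" using B by auto
        then show ?thesis using True
          by (auto simp: indicator_def abs_mult mult.commute[of "\<bar>g _\<bar>"] intro: mult_right_mono)
      qed auto
    qed
  qed measurable
qed

text \<open>Integration by parts against the primitive \<open>z \<mapsto> \<integral>\<^sub>0\<^sup>z g\<close>, by Fubini on the triangle
  \<open>0 \<le> s < z < 1\<close>.\<close>

lemma integral_primitive_mult_deriv:
  fixes g \<theta> \<theta>' :: "real \<Rightarrow> real"
  assumes g: "integrable lborel g"
    and \<theta>': "\<And>z. (\<theta> has_real_derivative \<theta>' z) (at z)" and cont: "continuous_on UNIV \<theta>'"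
    and vanish: "\<And>z. z \<notin> {0<..<1} \<Longrightarrow> \<theta> z = 0"
  shows "(\<integral>z. indicator {0<..<1} z * (\<integral>s. indicator {0..<z} s * g s \<partial>lborel) * \<theta>' z \<partial>lborel)
       = - (\<integral>s. g s * \<theta> s \<partial>lborel)"
proof -
  define H where "H = (\<lambda>p::real \<times> real.
    if 0 < fst p \<and> fst p < 1 \<and> 0 \<le> snd p \<and> snd p < fst p then g (snd p) * \<theta>' (fst p) else 0)"
  have "(\<integral>z. indicator {0<..<1} z * (\<integral>s. indicator {0..<z} s * g s \<partial>lborel) * \<theta>' z \<partial>lborel)
       = (\<integral>z. (\<integral>s. H (z, s) \<partial>lborel) \<partial>lborel)"
  proof (rule Bochner_Integration.integral_cong[OF refl])
    fix z :: real
    show "indicator {0<..<1} z * (\<integral>s. indicator {0..<z} s * g s \<partial>lborel) * \<theta>' z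
        = (\<integral>s. H (z, s) \<partial>lborel)"
    proof (cases "0 < z \<and> z < 1")
      case True
      have "(\<integral>s. H (z, s) \<partial>lborel) = (\<integral>s. (indicator {0..<z} s * g s) * \<theta>' z \<partial>lborel)"
        by (rule Bochner_Integration.integral_cong) (use True in \<open>auto simp: H_def indicator_def\<close>)
      then show ?thesis using True by simp
    qed (auto simp: H_def)
  qed
  also have "\<dots> = (\<integral>s. (\<integral>z. H (z, s) \<partial>lborel) \<partial>lborel)"
  proof -
    have "integrable (lborel \<Otimes>\<^sub>M lborel) H"
      unfolding H_def by (rule integrable_triangle_kernel[OF g cont])
    then show ?thesis using lborel_pair.Fubini_integral[of "\<lambda>z s. H (z, s)"] by simp
  qed
  also have "\<dots> = (\<integral>s. - (g s * \<theta> s) \<partial>lborel)"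
  proof (rule Bochner_Integration.integral_cong[OF refl])
    fix s :: real
    show "(\<integral>z. H (z, s) \<partial>lborel) = - (g s * \<theta> s)"
    proof (cases "0 \<le> s \<and> s < 1")
      case True
      have "(\<integral>z. H (z, s) \<partial>lborel) = (\<integral>z. g s * (indicator {s<..<1} z * \<theta>' z) \<partial>lborel)"
        by (rule Bochner_Integration.integral_cong) (use True in \<open>auto simp: H_def indicator_def\<close>)
      also have "\<dots> = g s * (\<theta> 1 - \<theta> s)"
        using integral_Ioo_deriv[OF \<theta>' cont, of s 1] True by simp
      finally show ?thesis using vanish[of 1] by simp
    next
      case False
      then have "H (z, s) = 0" for z by (auto simp: H_def indicator_def)
      moreover have "\<theta> s = 0" using False vanish[of s] by auto
      ultimately show ?thesis by simp
    qed
  qed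
  finally show ?thesis by simp
qed

lemma continuous_on_integral_upto:
  fixes g :: "real \<Rightarrow> real"
  assumes g: "integrable lborel g"
  shows "continuous_on UNIV (\<lambda>z. \<integral>s. indicator {0..<z} s * g s \<partial>lborel)"
proof -
  have [measurable]: "g \<in> borel_measurable borel" using g by auto
  have "isCont (\<lambda>z. \<integral>s. indicator {0..<z} s * g s \<partial>lborel) z" for z
  proof (rule continuous_at_sequentiallyI)
    fix X :: "nat \<Rightarrow> real" assume X: "X \<longlonglongrightarrow> z"
    show "(\<lambda>n. \<integral>s. indicator {0..<X n} s * g s \<partial>lborel) \<longlonglongrightarrow> (\<integral>s. indicator {0..<z} s * g s \<partial>lborel)"
    proof (rule integral_dominated_convergence[where w="\<lambda>s. norm (g s)"])
      show "AE s in lborel. (\<lambda>n. indicator {0..<X n} s * g s) \<longlonglongrightarrow> indicator {0..<z} s * g s"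
        using AE_lborel_singleton[of z]
      proof eventually_elim
        case (elim s)
        have "\<forall>\<^sub>F n in sequentially. (s < X n \<longleftrightarrow> s < z)"
        proof (cases "s < z")
          case True
          then show ?thesis using order_tendstoD(1)[OF X True] by (auto elim: eventually_mono)
        next
          case False
          with elim have "z < s" by auto
          then show ?thesis using order_tendstoD(2)[OF X \<open>z < s\<close>] by (auto elim: eventually_mono)
        qed
        then have "\<forall>\<^sub>F n in sequentially. indicator {0..<X n} s * g s = indicator {0..<z} s * g s"
          by eventually_elim (auto simp: indicator_def)
        then show ?case by (rule tendsto_eventually)
      qed
    qed (use g in \<open>auto simp: indicator_def\<close>)
  qed
  then show ?thesis by (simp add: continuous_at_imp_continuous_on)
qed

lemma abs_integral_upto_le:
  fixes g :: "real \<Rightarrow> real"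
  assumes g: "integrable lborel g"
  shows "\<bar>\<integral>s. indicator {0..<z} s * g s \<partial>lborel\<bar> \<le> (\<integral>s. \<bar>g s\<bar> \<partial>lborel)"
proof -
  have [measurable]: "g \<in> borel_measurable borel" using g by auto
  have "integrable lborel (\<lambda>s. indicator {0..<z} s * g s)"
    by (rule Bochner_Integration.integrable_bound[OF g]) (auto simp: indicator_def)
  then have "(\<integral>s. \<bar>indicator {0..<z} s * g s\<bar> \<partial>lborel) \<le> (\<integral>s. \<bar>g s\<bar> \<partial>lborel)"
    using g by (intro integral_mono) (auto simp: indicator_def)
  with integral_abs_bound show ?thesis by (rule order_trans)
qed

text \<open>Cauchy--Schwarz on the unit interval, via \<open>0 \<le> \<integral>\<^sub>0\<^sup>1 (\<bar>q\<bar> - m)\<^sup>2\<close> with \<open>m = \<integral>\<bar>q\<bar>\<close>.\<close>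

lemma integral_abs_power2_le_integral_power2:
  fixes q :: "real \<Rightarrow> real"
  assumes q: "integrable lborel q" and q2: "integrable lborel (\<lambda>x. (q x)\<^sup>2)"
    and vanish: "\<And>x. x \<notin> {0<..<1} \<Longrightarrow> q x = 0"
  shows "(\<integral>x. \<bar>q x\<bar> \<partial>lborel)\<^sup>2 \<le> (\<integral>x. (q x)\<^sup>2 \<partial>lborel)"
proof -
  define m where "m = (\<integral>x. \<bar>q x\<bar> \<partial>lborel)"
  have i01: "integrable lborel (indicator {0<..<1::real} :: real \<Rightarrow> real)"
    by (auto simp: integrable_indicator_iff)
  have "0 \<le> (\<integral>x. indicator {0<..<1::real} x * (\<bar>q x\<bar> - m)\<^sup>2 \<partial>lborel)"
    by (intro integral_nonneg_AE) auto
  also have "\<dots> = (\<integral>x. (q x)\<^sup>2 - 2 * m * \<bar>q x\<bar> + m\<^sup>2 * indicator {0<..<1::real} x \<partial>lborel)"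
  proof (rule Bochner_Integration.integral_cong[OF refl])
    fix x :: real
    show "indicator {0<..<1} x * (\<bar>q x\<bar> - m)\<^sup>2 = (q x)\<^sup>2 - 2 * m * \<bar>q x\<bar> + m\<^sup>2 * indicator {0<..<1} x"
      using vanish[of x] by (cases "x \<in> {0<..<1}") (auto simp: power2_eq_square algebra_simps)
  qed
  also have "\<dots> = (\<integral>x. (q x)\<^sup>2 \<partial>lborel) - m\<^sup>2"
    using q q2 i01 by (simp add: m_def power2_eq_square)
  finally show ?thesis by (simp add: m_def)
qed

lemma continuous_on_AE_eq_imp_eq_left:
  fixes f h :: "real \<Rightarrow> real"
  assumes f: "continuous_on {a..<b} f" and h: "continuous_on {a..<b} h" and ab: "a < b"
    and ae: "AE z in lborel. z \<in> {a<..<b} \<longrightarrow> f z = h z"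
  shows "f a = h a"
proof (rule ccontr)
  assume ne: "f a \<noteq> h a"
  have "continuous (at a within {a..<b}) (\<lambda>z. f z - h z)"
    using continuous_on_diff[OF f h] ab by (simp add: continuous_on_eq_continuous_within)
  then obtain e where e: "e > 0"
    "\<And>z. z \<in> {a..<b} \<Longrightarrow> dist z a < e \<Longrightarrow> dist (f z - h z) (f a - h a) < \<bar>f a - h a\<bar>"
    using ne unfolding continuous_within_eps_delta by (metis zero_less_abs_iff right_minus_eq)
  define e' where "e' = min e (b - a)"
  have "AE z in lborel. z \<notin> {a<..<a + e'}"
    using ae
  proof eventually_elim
    case (elim z)
    show ?case
    proof
      assume z: "z \<in> {a<..<a + e'}"
      then have "dist (f z - h z) (f a - h a) < \<bar>f a - h a\<bar>"
        using e(2)[of z] by (auto simp: e'_def dist_real_def)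
      moreover have "f z = h z" using elim z by (auto simp: e'_def)
      ultimately show False by (simp add: dist_real_def)
    qed
  qed
  then have "{a<..<a + e'} \<in> null_sets lborel"
    by (simp add: AE_iff_null_sets)
  then show False using e ab by (simp add: e'_def null_sets_def)
qed

lemma power2_add_le_2_sum_squares: "((p::real) + q)\<^sup>2 \<le> 2 * (p\<^sup>2 + q\<^sup>2)"
  using zero_le_power2[of "p - q"] by (simp add: power2_eq_square algebra_simps)

lemma sqrt_le_sqrt_2_mult_add:
  fixes X Y Z :: real
  assumes "Z \<le> 2 * (X + Y)" "0 \<le> X" "0 \<le> Y"
  shows "sqrt Z \<le> sqrt 2 * (sqrt X + sqrt Y)"
proof -
  have "sqrt Z \<le> sqrt (2 * (X + Y))" using assms(1) by (rule real_sqrt_le_mono)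
  also have "\<dots> = sqrt 2 * sqrt (X + Y)" by (simp only: real_sqrt_mult)
  also have "\<dots> \<le> sqrt 2 * (sqrt X + sqrt Y)"
    by (rule mult_left_mono[OF sqrt_add_le_add_sqrt[OF assms(2,3)]]) simp
  finally show ?thesis .
qed

lemma integrable_if_square_integrable_bounded_support:
  fixes f :: "'b::euclidean_space \<Rightarrow> real"
  assumes "f \<in> borel_measurable borel" and A: "bounded A" "A \<in> sets borel"
    and vanish: "\<And>x. x \<notin> A \<Longrightarrow> f x = 0" and f2: "integrable lborel (\<lambda>x. (f x)\<^sup>2)"
  shows "integrable lborel f"
proof (rule Bochner_Integration.integrable_bound[where f="\<lambda>x. indicator A x + (f x)\<^sup>2"])
  obtain a b where "A \<subseteq> cbox a b" using bounded_subset_cbox_symmetric[OF A(1)] by blast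
  then have "emeasure lborel A \<le> emeasure lborel (cbox a b)"
    by (rule emeasure_mono) simp
  then have "emeasure lborel A < \<infinity>"
    using emeasure_lborel_cbox_finite[of a b] by (simp add: le_less_trans less_top)
  then show "integrable lborel (\<lambda>x. indicator A x + (f x)\<^sup>2)"
    using f2 A(2) by (simp add: integrable_indicator_iff)
  have "\<bar>f x\<bar> \<le> 1 + (f x)\<^sup>2" for x
  proof (cases "\<bar>f x\<bar> \<le> 1")
    case True
    then show ?thesis using zero_le_power2[of "f x"] by linarith
  next
    case False
    then have "\<bar>f x\<bar> * 1 \<le> \<bar>f x\<bar> * \<bar>f x\<bar>" by (intro mult_left_mono) auto
    then show ?thesis by (simp add: power2_eq_square)
  qed
  then show "AE x in lborel. norm (f x) \<le> norm (indicator A x + (f x)\<^sup>2)"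
    using vanish by (intro AE_I2) (auto simp: indicator_def)
qed (use assms in simp)

lemma box_Pair_eq: "box (a, c) (b, d) = box a b \<times> box c d"
  by (auto simp: box_def Basis_prod_def ball_Un)

lemma integrable_lborel_pair:
  "integrable lborel (f :: 'x::euclidean_space \<times> 'y::euclidean_space \<Rightarrow> real) \<Longrightarrow>
   integrable (lborel \<Otimes>\<^sub>M lborel) f"
  by (simp add: lborel_prod)

lemma AE_pair_fst:
  assumes "AE x in (lborel::'x::euclidean_space measure). P x"
  shows "AE p in (lborel::'x measure) \<Otimes>\<^sub>M (lborel::'y::euclidean_space measure). P (fst p)"
proof -
  obtain N where N: "N \<in> null_sets lborel" "{x \<in> space lborel. \<not> P x} \<subseteq> N"
    using assms unfolding eventually_ae_filter by blast
  have "N \<times> UNIV \<in> null_sets ((lborel::'x measure) \<Otimes>\<^sub>M (lborel::'y measure))"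
    using N(1) by (simp add: null_sets_def lborel.emeasure_pair_measure_Times)
  moreover have "{p \<in> space (lborel \<Otimes>\<^sub>M lborel). \<not> P (fst p)} \<subseteq> N \<times> (UNIV::'y set)"
    using N(2) by auto
  ultimately show ?thesis unfolding eventually_ae_filter by blast
qed

lemma borel_measurable_integral_snd:
  fixes F :: "'x::euclidean_space \<times> real \<Rightarrow> real"
  assumes "F \<in> borel_measurable borel"
  shows "(\<lambda>x. \<integral>z. F (x, z) \<partial>lborel) \<in> borel_measurable borel"
proof -
  have "F \<in> borel_measurable ((borel::'x measure) \<Otimes>\<^sub>M lborel)"
    using assms
    by (simp add: measurable_cong_sets[OF sets_pair_measure_cong[OF refl sets_lborel] refl] borel_prod)
  then show ?thesis
    by (rule lborel.borel_measurable_lebesgue_integral[where f="\<lambda>x z. F (x, z)", simplified])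
qed

text \<open>Lets the measurability prover split Borel sets of a product type into factors.\<close>

lemma measurable_id_borel_prod [measurable]:
  "(\<lambda>x::'x::euclidean_space \<times> 'y::euclidean_space. x) \<in> borel \<rightarrow>\<^sub>M borel \<Otimes>\<^sub>M borel"
  by (simp add: borel_prod)

lemma integral_lborel_pair_lines:
  fixes F :: "'x::euclidean_space \<times> real \<Rightarrow> real"
  assumes "integrable lborel F"
  shows "(\<integral>p. F p \<partial>lborel) = (\<integral>x. (\<integral>z. F (x, z) \<partial>lborel) \<partial>lborel)"
  using lborel_pair.integral_fst'[OF integrable_lborel_pair[OF assms]] by (simp add: lborel_prod)

lemma integrable_mult_tensor:
  fixes f :: "'x::euclidean_space \<times> real \<Rightarrow> real" and P :: "'x \<Rightarrow> real" and \<psi> :: "real \<Rightarrow> real"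
  assumes f: "integrable lborel f" and [measurable]: "P \<in> borel_measurable borel"
    and P: "\<And>x. \<bar>P x\<bar> \<le> 1" and \<psi>: "continuous_on UNIV \<psi>" "\<And>z. z \<notin> {a..b} \<Longrightarrow> \<psi> z = 0"
  shows "integrable lborel (\<lambda>p. f p * (P (fst p) * \<psi> (snd p)))"
proof -
  obtain K where K: "\<And>z. \<bar>\<psi> z\<bar> \<le> K" using continuous_vanishing_outside_abs_bound[OF \<psi>] by blast
  have [measurable]: "\<psi> \<in> borel_measurable borel" using \<psi>(1) by (rule borel_measurable_continuous_onI)
  have "\<bar>P (fst p) * \<psi> (snd p)\<bar> \<le> 1 * K" for p
    unfolding abs_mult by (rule mult_mono[OF P K]) auto
  then show ?thesis by (intro integrable_mult_bounded[OF f]) auto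
qed

section \<open>Lebesgue integrals only see almost-everywhere classes\<close>

lemma integrable_lebesgue_cong_AE:
  fixes f g :: "'b::euclidean_space \<Rightarrow> real"
  assumes "AE x in lebesgue. f x = g x"
  shows "integrable lebesgue f \<longleftrightarrow> integrable lebesgue g"
proof (cases "f \<in> borel_measurable lebesgue")
  case True
  then have "g \<in> borel_measurable lebesgue" using borel_measurable_AE assms by blast
  with True show ?thesis using assms by (rule integrable_cong_AE)
next
  case False
  have "AE x in lebesgue. g x = f x" using assms by (auto elim: eventually_mono)
  then have "g \<notin> borel_measurable lebesgue" using False borel_measurable_AE by blast
  with False show ?thesis by auto
qed

lemma integral_lebesgue_cong_AE:
  fixes f g :: "'b::euclidean_space \<Rightarrow> real"
  assumes "AE x in lebesgue. f x = g x"
  shows "integral\<^sup>L lebesgue f = integral\<^sup>L lebesgue g"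
proof (cases "integrable lebesgue f")
  case True
  then have "integrable lebesgue g" using integrable_lebesgue_cong_AE[OF assms] by simp
  with True show ?thesis using assms by (intro integral_cong_AE) auto
next
  case False
  then have "\<not> integrable lebesgue g" using integrable_lebesgue_cong_AE[OF assms] by simp
  with False show ?thesis by (simp add: not_integrable_integral_eq)
qed

lemma in_L2_cong_AE:
  assumes "AE x in lebesgue. x \<in> A \<longrightarrow> f x = g x"
  shows "in_L2 A f \<longleftrightarrow> in_L2 A g"
proof -
  have fg: "AE x in lebesgue. indicator A x * f x = indicator A x * g x"
    and gf: "AE x in lebesgue. indicator A x * g x = indicator A x * f x"
    and sq: "AE x in lebesgue. indicator A x *\<^sub>R (f x)\<^sup>2 = indicator A x *\<^sub>R (g x)\<^sup>2"
    using assms by (auto elim!: eventually_mono simp: indicator_def)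
  have "(\<lambda>x. indicator A x * f x) \<in> borel_measurable lebesgue \<longleftrightarrow>
        (\<lambda>x. indicator A x * g x) \<in> borel_measurable lebesgue"
    using borel_measurable_AE[OF _ fg] borel_measurable_AE[OF _ gf] by (intro iffI)
  moreover have "set_integrable lebesgue A (\<lambda>x. (f x)\<^sup>2) \<longleftrightarrow> set_integrable lebesgue A (\<lambda>x. (g x)\<^sup>2)"
    unfolding set_integrable_def by (rule integrable_lebesgue_cong_AE[OF sq])
  ultimately show ?thesis unfolding in_L2_def by simp
qed

lemma set_integral_lebesgue_cong_AE:
  fixes f g :: "'b::euclidean_space \<Rightarrow> real"
  assumes "AE x in lebesgue. x \<in> A \<longrightarrow> f x = g x"
  shows "(LINT x:A|lebesgue. f x) = (LINT x:A|lebesgue. g x)"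
  unfolding set_lebesgue_integral_def
  by (rule integral_lebesgue_cong_AE) (use assms in \<open>auto elim!: eventually_mono simp: indicator_def\<close>)

lemma L2_norm_cong_AE:
  assumes "AE x in lebesgue. x \<in> A \<longrightarrow> f x = g x"
  shows "L2_norm A f = L2_norm A g"
  unfolding L2_norm_def
  by (subst set_integral_lebesgue_cong_AE[where g="\<lambda>x. (g x)\<^sup>2"])
     (use assms in \<open>auto elim!: eventually_mono\<close>)

lemma weak_dz_cong_AE:
  assumes "AE p in lebesgue. p \<in> U \<longrightarrow> u p = u' p" and "AE p in lebesgue. p \<in> U \<longrightarrow> g p = g' p"
  shows "weak_dz U u g \<longleftrightarrow> weak_dz U u' g'"
proof -
  have "(LINT p:U|lebesgue. u p * \<psi> p) = (LINT p:U|lebesgue. u' p * \<psi> p)" for \<psi>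
    by (rule set_integral_lebesgue_cong_AE) (use assms(1) in \<open>auto elim: eventually_mono\<close>)
  moreover have "(LINT p:U|lebesgue. g p * \<psi> p) = (LINT p:U|lebesgue. g' p * \<psi> p)" for \<psi>
    by (rule set_integral_lebesgue_cong_AE) (use assms(2) in \<open>auto elim: eventually_mono\<close>)
  ultimately show ?thesis unfolding weak_dz_def by presburger
qed

lemma H_dz_cong_AE:
  assumes "AE p in lebesgue. p \<in> Omega2 G \<longrightarrow> u p = u' p"
    and "AE p in lebesgue. p \<in> Omega2 G \<longrightarrow> g p = g' p"
  shows "H_dz G u g \<longleftrightarrow> H_dz G u' g'"
  unfolding H_dz_def using in_L2_cong_AE weak_dz_cong_AE assms by blast

lemma is_trace_cong_AE:
  assumes "AE p in lebesgue. p \<in> Omega2 G \<longrightarrow> u p = u' p"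
  shows "is_trace G u t \<longleftrightarrow> is_trace G u' t"
proof -
  have "(AE p in lebesgue. p \<in> Omega2 G \<longrightarrow> v p = u p) \<longleftrightarrow>
        (AE p in lebesgue. p \<in> Omega2 G \<longrightarrow> v p = u' p)" for v
    using assms by auto
  then show ?thesis unfolding is_trace_def by presburger
qed

lemma set_integral_lebesgue_eq_lborel:
  fixes f :: "'b::euclidean_space \<Rightarrow> real"
  assumes "f \<in> borel_measurable borel" and "\<And>x. x \<notin> A \<Longrightarrow> f x = 0"
  shows "(LINT x:A|lebesgue. f x) = (\<integral>x. f x \<partial>lborel)"
proof -
  have "(\<lambda>x. indicator A x *\<^sub>R f x) = f"
    using assms(2) by (auto simp: fun_eq_iff indicator_def)
  then show ?thesis
    unfolding set_lebesgue_integral_def using assms(1) by (simp add: integral_completion)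
qed

lemma in_L2_iff_lborel:
  fixes f :: "'b::euclidean_space \<Rightarrow> real"
  assumes "f \<in> borel_measurable borel" and "\<And>x. x \<notin> A \<Longrightarrow> f x = 0"
  shows "in_L2 A f \<longleftrightarrow> integrable lborel (\<lambda>x. (f x)\<^sup>2)"
proof -
  have "(\<lambda>x. indicator A x * f x) = f" "(\<lambda>x. indicator A x *\<^sub>R (f x)\<^sup>2) = (\<lambda>x. (f x)\<^sup>2)"
    using assms(2) by (auto simp: fun_eq_iff indicator_def)
  moreover have "f \<in> borel_measurable lebesgue"
    using assms(1) by (intro measurable_completion) simp
  ultimately show ?thesis
    unfolding in_L2_def set_integrable_def using assms(1) by (simp add: integrable_completion)
qed

lemma L2_norm_eq_lborel:
  fixes f :: "'b::euclidean_space \<Rightarrow> real"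
  assumes "f \<in> borel_measurable borel" and "\<And>x. x \<notin> A \<Longrightarrow> f x = 0"
  shows "L2_norm A f = sqrt (\<integral>x. (f x)\<^sup>2 \<partial>lborel)"
  unfolding L2_norm_def using assms by (subst set_integral_lebesgue_eq_lborel) auto

lemma in_L2_borel_representative:
  fixes f :: "'b::euclidean_space \<Rightarrow> real"
  assumes A: "A \<in> sets borel" and f: "in_L2 A f"
  obtains f0 where "f0 \<in> borel_measurable borel" "\<And>x. x \<notin> A \<Longrightarrow> f0 x = 0"
    "AE x in lebesgue. x \<in> A \<longrightarrow> f x = f0 x"
proof -
  obtain fb where fb: "fb \<in> borel_measurable lborel" "AE x in lborel. indicator A x * f x = fb x"
    using completion_ex_borel_measurable_real[of "\<lambda>x. indicator A x * f x" lborel] f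
    by (auto simp: in_L2_def)
  show ?thesis
  proof
    show "(\<lambda>x. indicator A x * fb x) \<in> borel_measurable borel" using A fb(1) by simp
    show "AE x in lebesgue. x \<in> A \<longrightarrow> f x = indicator A x * fb x"
      using AE_completion[OF fb(2)] by eventually_elim (auto simp: indicator_def)
  qed (simp add: indicator_def)
qed

section \<open>A smooth probability density on the unit interval\<close>

lemma integral_bump_pos:
  assumes "a < b" shows "(\<integral>t. bump n a b t \<partial>lborel) > 0"
proof -
  have vanish: "t \<notin> {a..b} \<Longrightarrow> bump n a b t = 0" for t
    using bump_nonzero_imp by fastforce
  have cont: "continuous_on {a..b} (bump n a b)"
    by (rule continuous_on_subset[OF bump_continuous]) simp
  have "bump n a b ((a + b) / 2) \<noteq> 0"
    using assms by (simp add: bump_def flat_exp_def)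
  moreover have "(a + b) / 2 \<in> {a..b}" using assms by simp
  ultimately have "integral {a..b} (bump n a b) \<noteq> 0"
    using integral_eq_0_iff[OF cont assms bump_nonneg] by blast
  moreover have "0 \<le> integral {a..b} (bump n a b)"
    by (rule integral_nonneg[OF integrable_continuous_real[OF cont] bump_nonneg])
  ultimately show ?thesis
    using has_integral_eq_lborel_integral(2)[OF bump_continuous vanish] by simp
qed

lemma bump_integrable: "integrable lborel (bump n a b)"
  by (rule has_integral_eq_lborel_integral(1)[OF bump_continuous, of a b])
     (use bump_nonzero_imp in fastforce)

definition mollifier :: "real \<Rightarrow> real" where
  "mollifier t = bump 0 (1/4) (3/4) t / (\<integral>s. bump 0 (1/4) (3/4) s \<partial>lborel)"

lemma mollifier_flat_exp_alg: "flat_exp_alg mollifier"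
proof -
  have "mollifier = (\<lambda>t. bump 0 (1/4) (3/4) t * (1 / (\<integral>s. bump 0 (1/4) (3/4) s \<partial>lborel)))"
    by (simp add: mollifier_def fun_eq_iff)
  moreover have "flat_exp_alg (\<lambda>t. bump 0 (1/4) (3/4) t * (1 / (\<integral>s. bump 0 (1/4) (3/4) s \<partial>lborel)))"
    by (intro flat_exp_alg.intros bump_flat_exp_alg)
  ultimately show ?thesis by simp
qed

lemma mollifier_continuous: "continuous_on UNIV mollifier"
  by (rule flat_exp_alg_continuous[OF mollifier_flat_exp_alg])

lemma mollifier_borel_measurable [measurable]: "mollifier \<in> borel_measurable borel"
  by (rule borel_measurable_continuous_onI[OF mollifier_continuous])

lemma mollifier_nonzero_imp: "mollifier t \<noteq> 0 \<Longrightarrow> 1/4 < t \<and> t < 3/4"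
  using bump_nonzero_imp by (force simp: mollifier_def)

lemma mollifier_vanish: "t \<notin> {0<..<1} \<Longrightarrow> mollifier t = 0"
  using mollifier_nonzero_imp by force

lemma mollifier_vanish_Icc: "t \<notin> {0..1} \<Longrightarrow> mollifier t = 0"
  by (rule mollifier_vanish) auto

lemma mollifier_integrable: "integrable lborel mollifier"
  by (rule has_integral_eq_lborel_integral(1)[OF mollifier_continuous mollifier_vanish_Icc])

lemma integral_mollifier: "(\<integral>t. mollifier t \<partial>lborel) = 1"
  unfolding mollifier_def integral_divide_zero using integral_bump_pos[of "1/4" "3/4" 0] by simp

lemma mollifier_abs_bound: obtains K where "\<And>t. \<bar>mollifier t\<bar> \<le> K"
  using continuous_vanishing_outside_abs_bound[OF mollifier_continuous mollifier_vanish_Icc] by blast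

text \<open>Subtracting the right multiple of the mollifier makes a bump integrate to zero, so that it
  has a smooth primitive vanishing near both ends of the unit interval.\<close>

lemma bump_minus_mollifier_primitive:
  assumes "0 < \<alpha>" and "\<beta> < 1"
  obtains \<theta> m M where "real_smooth \<theta>" "0 < m" "M < 1" "\<And>z. \<theta> z \<noteq> 0 \<Longrightarrow> m < z \<and> z < M"
    "\<And>z. (\<theta> has_real_derivative
            bump n \<alpha> \<beta> z - (\<integral>t. bump n \<alpha> \<beta> t \<partial>lborel) * mollifier z) (at z)"
proof -
  define C where "C = (\<integral>t. bump n \<alpha> \<beta> t \<partial>lborel)"
  define h where "h = (\<lambda>t. bump n \<alpha> \<beta> t - C * mollifier t)"
  define m where "m = min \<alpha> (1/4)"
  define M where "M = max \<beta> (3/4)"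
  have m: "0 < m" and M: "M < 1" using assms by (auto simp: m_def M_def)
  have "flat_exp_alg (\<lambda>t. bump n \<alpha> \<beta> t + (- C) * mollifier t)"
    by (intro flat_exp_alg.intros bump_flat_exp_alg mollifier_flat_exp_alg)
  then have smooth: "real_smooth h"
    unfolding h_def by (simp add: flat_exp_alg_real_smooth)
  have supp: "m < t \<and> t < M" if "h t \<noteq> 0" for t
    using that bump_nonzero_imp[of n \<alpha> \<beta> t] mollifier_nonzero_imp[of t]
    by (force simp: h_def m_def M_def)
  then have vanish: "t \<notin> {m..M} \<Longrightarrow> h t = 0" for t by force
  have "integral {m..M} h = (\<integral>t. h t \<partial>lborel)"
    by (rule has_integral_eq_lborel_integral(2)[OF real_smooth_continuous[OF smooth] vanish])
  also have "\<dots> = C - C * (\<integral>t. mollifier t \<partial>lborel)"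
    unfolding h_def C_def using bump_integrable mollifier_integrable by simp
  also have "\<dots> = 0" by (simp add: integral_mollifier)
  finally have int0: "integral {m..M} h = 0" .
  note primitive = real_smooth_primitive[OF smooth supp int0]
  show ?thesis
  proof (rule that[OF primitive(1) m M])
    show "integral {m..z} h \<noteq> 0 \<Longrightarrow> m < z \<and> z < M" for z
      using primitive(3,4)[of z] by force
    show "((\<lambda>z. integral {m..z} h) has_real_derivative
        bump n \<alpha> \<beta> z - (\<integral>t. bump n \<alpha> \<beta> t \<partial>lborel) * mollifier z) (at z)" for z
      using primitive(2)[of z] by (simp add: h_def C_def)
  qed
qed

section \<open>The vertical trace\<close>

locale dz_setting =
  fixes G :: "'a::euclidean_space set" and u g :: "'a \<times> real \<Rightarrow> real"
  assumes open_G: "open G" and bounded_G: "bounded G"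
    and u_borel [measurable]: "u \<in> borel_measurable borel"
    and g_borel [measurable]: "g \<in> borel_measurable borel"
    and u_vanish: "\<And>p. p \<notin> Omega2 G \<Longrightarrow> u p = 0"
    and g_vanish: "\<And>p. p \<notin> Omega2 G \<Longrightarrow> g p = 0"
    and H_dz: "H_dz G u g"
begin

lemma Omega2_borel [measurable]: "Omega2 G \<in> sets borel"
  unfolding Omega2_def using open_G by (intro borel_open open_Times) auto

lemma Omega_borel [measurable]: "G \<times> {0<..<1::real} \<in> sets borel"
  using Omega2_borel by (simp add: Omega2_def)

lemma u_vanish_line: "x \<notin> G \<or> z \<notin> {0<..<1} \<Longrightarrow> u (x, z) = 0"
  and g_vanish_line: "x \<notin> G \<or> z \<notin> {0<..<1} \<Longrightarrow> g (x, z) = 0"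
  using u_vanish g_vanish by (auto simp: Omega2_def)

lemma u_square_integrable: "integrable lborel (\<lambda>p. (u p)\<^sup>2)"
  and g_square_integrable: "integrable lborel (\<lambda>p. (g p)\<^sup>2)"
  using H_dz in_L2_iff_lborel[OF u_borel u_vanish] in_L2_iff_lborel[OF g_borel g_vanish]
  by (auto simp: H_dz_def)

lemma u_integrable: "integrable lborel u" and g_integrable: "integrable lborel g"
proof -
  have "bounded (Omega2 G)" unfolding Omega2_def using bounded_G by (intro bounded_Times) auto
  then show "integrable lborel u" "integrable lborel g"
    by (rule integrable_if_square_integrable_bounded_support[OF u_borel _ Omega2_borel]
        integrable_if_square_integrable_bounded_support[OF g_borel _ Omega2_borel];
        simp add: u_vanish g_vanish u_square_integrable g_square_integrable)+
qed

lemma weak_dz_lborel: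
  assumes "test_fun (Omega2 G) \<phi>"
  shows "(\<integral>p. u p * frechet_derivative \<phi> (at p) (0, 1) \<partial>lborel) = - (\<integral>p. g p * \<phi> p \<partial>lborel)"
proof -
  have smooth: "smooth_fun \<phi>" using assms by (simp add: test_fun_def)
  have [measurable]: "\<phi> \<in> borel_measurable borel"
    "(\<lambda>p. frechet_derivative \<phi> (at p) (0, 1)) \<in> borel_measurable borel"
    using smooth_fun_continuous[OF smooth]
      smooth_fun_continuous[OF smooth_fun_directional_derivative[OF smooth]]
    by (auto intro: borel_measurable_continuous_onI)
  have "(LINT p:Omega2 G|lebesgue. u p * frechet_derivative \<phi> (at p) (0, 1))
      = (\<integral>p. u p * frechet_derivative \<phi> (at p) (0, 1) \<partial>lborel)"
    "(LINT p:Omega2 G|lebesgue. g p * \<phi> p) = (\<integral>p. g p * \<phi> p \<partial>lborel)"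
    by (rule set_integral_lebesgue_eq_lborel; simp add: u_vanish g_vanish)+
  then show ?thesis using H_dz assms by (simp add: H_dz_def weak_dz_def)
qed

definition good_line :: "'a \<Rightarrow> bool" where
  "good_line x \<longleftrightarrow> integrable lborel (\<lambda>z. u (x, z)) \<and> integrable lborel (\<lambda>z. g (x, z))
     \<and> integrable lborel (\<lambda>z. (u (x, z))\<^sup>2) \<and> integrable lborel (\<lambda>z. (g (x, z))\<^sup>2)"

lemma AE_good_line: "AE x in lborel. good_line x"
proof -
  have "AE x in lborel. integrable lborel (\<lambda>z. f (x, z))"
    if "integrable lborel f" for f :: "'a \<times> real \<Rightarrow> real"
    using lborel_pair.AE_integrable_fst'[OF integrable_lborel_pair[OF that]] by simp
  from this[OF u_integrable] this[OF g_integrable] this[OF u_square_integrable]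
    this[OF g_square_integrable]
  show ?thesis unfolding good_line_def by eventually_elim auto
qed

definition primitive :: "'a \<Rightarrow> real \<Rightarrow> real" where
  "primitive x z = (\<integral>s. indicator {0..<z} s * g (x, s) \<partial>lborel)"

definition line_l1 :: "'a \<Rightarrow> real" where
  "line_l1 x = (\<integral>s. \<bar>g (x, s)\<bar> \<partial>lborel)"

lemma primitive_borel_measurable [measurable]:
  "(\<lambda>p. primitive (fst p) (snd p)) \<in> borel_measurable borel"
proof -
  have eq: "(\<lambda>p. primitive (fst p) (snd p))
      = (\<lambda>p. \<integral>s. (if 0 \<le> s \<and> s < snd p then g (fst p, s) else 0) \<partial>lborel)"
    unfolding primitive_def
    by (auto simp: indicator_def fun_eq_iff intro!: Bochner_Integration.integral_cong)
  have [measurable]: "g \<in> borel_measurable (borel \<Otimes>\<^sub>M borel)" by (simp add: borel_prod)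
  have "(\<lambda>q. if 0 \<le> snd q \<and> snd q < snd (fst q) then g (fst (fst q), snd q) else 0)
     \<in> borel_measurable (((borel :: 'a measure) \<Otimes>\<^sub>M (borel :: real measure)) \<Otimes>\<^sub>M borel)"
    by measurable
  then have "(\<lambda>q. if 0 \<le> snd q \<and> snd q < snd (fst q) then g (fst (fst q), snd q) else 0)
     \<in> borel_measurable ((borel :: ('a \<times> real) measure) \<Otimes>\<^sub>M lborel)"
    by (simp add: measurable_cong_sets[OF sets_pair_measure_cong[OF refl sets_lborel] refl] borel_prod)
  then show ?thesis unfolding eq
    by (intro lborel.borel_measurable_lebesgue_integral) (simp add: case_prod_beta)
qed

lemma primitive_line_borel_measurable [measurable]: "primitive x \<in> borel_measurable borel"
proof -
  have "(\<lambda>z. primitive (fst (x, z)) (snd (x, z))) \<in> borel_measurable borel" by measurable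
  then show ?thesis by simp
qed

lemma line_l1_integrable: "integrable lborel line_l1"
  unfolding line_l1_def[abs_def]
  using lborel_pair.integrable_fst'[OF integrable_lborel_pair[OF integrable_abs[OF g_integrable]]]
  by simp

lemma line_l1_nonneg: "0 \<le> line_l1 x"
  unfolding line_l1_def by simp

lemma abs_primitive_le: "good_line x \<Longrightarrow> \<bar>primitive x z\<bar> \<le> line_l1 x"
  unfolding primitive_def line_l1_def good_line_def by (intro abs_integral_upto_le) auto

lemma primitive_continuous: "good_line x \<Longrightarrow> continuous_on UNIV (primitive x)"
  unfolding primitive_def[abs_def] good_line_def by (intro continuous_on_integral_upto) auto

text \<open>On almost every vertical line \<open>u\<close> should be a constant plus the primitive of \<open>g\<close>; the
  constant is pinned down by testing against the mollifier.\<close>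

definition trace_val :: "'a \<Rightarrow> real" where
  "trace_val x = (\<integral>z. (u (x, z) - primitive x z) * mollifier z \<partial>lborel)"

definition rep :: "'a \<times> real \<Rightarrow> real" where
  "rep p = trace_val (fst p) + primitive (fst p) (snd p)"

definition defect :: "'a \<times> real \<Rightarrow> real" where
  "defect p = indicator (G \<times> {0<..<1}) p * (u p - rep p)"

lemma trace_val_borel_measurable [measurable]: "trace_val \<in> borel_measurable borel"
proof -
  have "(\<lambda>p. (u p - primitive (fst p) (snd p)) * mollifier (snd p)) \<in> borel_measurable borel"
    by measurable
  from borel_measurable_integral_snd[OF this] show ?thesis by (simp add: trace_val_def[abs_def])
qed

lemma rep_borel_measurable [measurable]: "rep \<in> borel_measurable borel"
  unfolding rep_def[abs_def] by measurable

lemma defect_borel_measurable [measurable]: "defect \<in> borel_measurable borel"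
  using Omega2_borel unfolding defect_def[abs_def] Omega2_def by measurable

lemma trace_integrand_integrable:
  "integrable (lborel \<Otimes>\<^sub>M lborel) (\<lambda>p. (u p - primitive (fst p) (snd p)) * mollifier (snd p))"
proof -
  obtain K where K: "\<And>t. \<bar>mollifier t\<bar> \<le> K" using mollifier_abs_bound by blast
  show ?thesis
  proof (rule Bochner_Integration.integrable_bound
      [where f="\<lambda>p. K * \<bar>u p\<bar> + line_l1 (fst p) * \<bar>mollifier (snd p)\<bar>"])
    show "integrable (lborel \<Otimes>\<^sub>M lborel) (\<lambda>p. K * \<bar>u p\<bar> + line_l1 (fst p) * \<bar>mollifier (snd p)\<bar>)"
      by (intro Bochner_Integration.integrable_add integrable_mult_right integrable_abs
          integrable_lborel_pair u_integrable integrable_pair_mult line_l1_integrable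
          mollifier_integrable)
    show "(\<lambda>p. (u p - primitive (fst p) (snd p)) * mollifier (snd p)) \<in> borel_measurable (lborel \<Otimes>\<^sub>M lborel)"
      by (simp add: lborel_prod)
    show "AE p in lborel \<Otimes>\<^sub>M lborel. norm ((u p - primitive (fst p) (snd p)) * mollifier (snd p))
        \<le> norm (K * \<bar>u p\<bar> + line_l1 (fst p) * \<bar>mollifier (snd p)\<bar>)"
      using AE_pair_fst[OF AE_good_line]
    proof eventually_elim
      case (elim p)
      have "\<bar>(u p - primitive (fst p) (snd p)) * mollifier (snd p)\<bar>
          \<le> (\<bar>u p\<bar> + \<bar>primitive (fst p) (snd p)\<bar>) * \<bar>mollifier (snd p)\<bar>"
        unfolding abs_mult by (intro mult_right_mono abs_triangle_ineq4) simp
      also have "\<dots> = \<bar>u p\<bar> * \<bar>mollifier (snd p)\<bar> + \<bar>primitive (fst p) (snd p)\<bar> * \<bar>mollifier (snd p)\<bar>"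
        by (simp add: distrib_right)
      also have "\<dots> \<le> \<bar>u p\<bar> * K + line_l1 (fst p) * \<bar>mollifier (snd p)\<bar>"
        by (intro add_mono mult_left_mono mult_right_mono K abs_primitive_le elim) auto
      finally show ?case using line_l1_nonneg[of "fst p"] by (simp add: mult.commute)
    qed
  qed
qed

lemma trace_val_integrable: "integrable lborel trace_val"
  unfolding trace_val_def[abs_def]
  using lborel_pair.integrable_fst'[OF trace_integrand_integrable] by simp

lemma rep_integrable_on_Omega: "integrable lborel (\<lambda>p. indicator (G \<times> {0<..<1}) p * rep p)"
proof -
  have "integrable (lborel \<Otimes>\<^sub>M lborel) (\<lambda>p. indicator (G \<times> {0<..<1}) p * rep p)"
  proof (rule Bochner_Integration.integrable_bound
      [where f="\<lambda>p. (\<bar>trace_val (fst p)\<bar> + line_l1 (fst p)) * indicator {0<..<1::real} (snd p)"])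
    show "integrable (lborel \<Otimes>\<^sub>M lborel)
        (\<lambda>p. (\<bar>trace_val (fst p)\<bar> + line_l1 (fst p)) * indicator {0<..<1::real} (snd p))"
      by (intro integrable_pair_mult Bochner_Integration.integrable_add integrable_abs
          trace_val_integrable line_l1_integrable) (auto simp: integrable_indicator_iff)
    show "(\<lambda>p. indicator (G \<times> {0<..<1}) p * rep p) \<in> borel_measurable (lborel \<Otimes>\<^sub>M lborel)"
      using Omega2_borel by (simp add: lborel_prod Omega2_def)
    show "AE p in lborel \<Otimes>\<^sub>M lborel. norm (indicator (G \<times> {0<..<1}) p * rep p)
        \<le> norm ((\<bar>trace_val (fst p)\<bar> + line_l1 (fst p)) * indicator {0<..<1::real} (snd p))"
      using AE_pair_fst[OF AE_good_line]
    proof eventually_elim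
      case (elim p)
      have "\<bar>rep p\<bar> \<le> \<bar>trace_val (fst p)\<bar> + line_l1 (fst p)"
        using abs_primitive_le[OF elim, of "snd p"] unfolding rep_def by linarith
      then show ?case using line_l1_nonneg[of "fst p"] by (auto simp: indicator_def)
    qed
  qed
  then show ?thesis by (simp add: lborel_prod)
qed

lemma defect_integrable: "integrable lborel defect"
proof -
  have "defect = (\<lambda>p. u p - indicator (G \<times> {0<..<1}) p * rep p)"
    using u_vanish by (auto simp: defect_def fun_eq_iff indicator_def Omega2_def)
  then show ?thesis using u_integrable rep_integrable_on_Omega by simp
qed

lemma trace_integrand_line_integrable:
  assumes "good_line x"
  shows "integrable lborel (\<lambda>z. (u (x, z) - primitive x z) * mollifier z)"
proof -
  obtain K where K: "\<And>t. \<bar>mollifier t\<bar> \<le> K" using mollifier_abs_bound by blast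
  have "integrable lborel (\<lambda>z. u (x, z) * mollifier z)"
    using assms unfolding good_line_def by (intro integrable_mult_bounded[OF _ _ K]) auto
  moreover have "integrable lborel (\<lambda>z. mollifier z * primitive x z)"
    by (rule integrable_mult_bounded[OF mollifier_integrable _ abs_primitive_le[OF assms]]) simp
  ultimately have "integrable lborel (\<lambda>z. u (x, z) * mollifier z - mollifier z * primitive x z)"
    by (rule Bochner_Integration.integrable_diff)
  then show ?thesis by (simp add: algebra_simps)
qed

lemma defect_orthogonal_mollifier:
  fixes P :: "'a \<Rightarrow> real"
  assumes [measurable]: "P \<in> borel_measurable borel" and P: "\<And>x. \<bar>P x\<bar> \<le> 1"
  shows "(\<integral>p. defect p * (P (fst p) * mollifier (snd p)) \<partial>lborel) = 0"
proof -
  have "integrable lborel (\<lambda>p. defect p * (P (fst p) * mollifier (snd p)))"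
    by (rule integrable_mult_tensor[OF defect_integrable _ P mollifier_continuous mollifier_vanish_Icc])
       simp
  then have "(\<integral>p. defect p * (P (fst p) * mollifier (snd p)) \<partial>lborel)
      = (\<integral>x. (\<integral>z. defect (x, z) * (P x * mollifier z) \<partial>lborel) \<partial>lborel)"
    by (simp add: integral_lborel_pair_lines)
  also have "\<dots> = 0"
  proof (rule integral_eq_zero_AE)
    show "AE x in lborel. (\<integral>z. defect (x, z) * (P x * mollifier z) \<partial>lborel) = 0"
      using AE_good_line
    proof eventually_elim
      case (elim x)
      show ?case
      proof (cases "x \<in> G")
        case True
        have "(\<integral>z. defect (x, z) * (P x * mollifier z) \<partial>lborel)
            = (\<integral>z. P x * ((u (x, z) - primitive x z) * mollifier z - trace_val x * mollifier z) \<partial>lborel)"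
        proof (rule Bochner_Integration.integral_cong[OF refl])
          fix z
          show "defect (x, z) * (P x * mollifier z)
              = P x * ((u (x, z) - primitive x z) * mollifier z - trace_val x * mollifier z)"
            using True mollifier_vanish[of z]
            by (cases "z \<in> {0<..<1}") (auto simp: defect_def rep_def algebra_simps)
        qed
        also have "\<dots> = P x * (trace_val x - trace_val x * (\<integral>z. mollifier z \<partial>lborel))"
          using trace_integrand_line_integrable[OF elim] mollifier_integrable
          by (simp add: trace_val_def)
        finally show ?thesis by (simp add: integral_mollifier)
      qed (simp add: defect_def)
    qed
  qed
  finally show ?thesis .
qed

lemma line_integral_rep_mult_deriv:
  fixes \<theta> \<theta>' :: "real \<Rightarrow> real"
  assumes x: "good_line x" "x \<in> G"
    and \<theta>': "\<And>z. (\<theta> has_real_derivative \<theta>' z) (at z)" and cont: "continuous_on UNIV \<theta>'"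
    and vanish: "\<And>z. z \<notin> {0<..<1} \<Longrightarrow> \<theta> z = 0"
  shows "(\<integral>z. indicator (G \<times> {0<..<1}) (x, z) * rep (x, z) * \<theta>' z \<partial>lborel)
    = - (\<integral>z. g (x, z) * \<theta> z \<partial>lborel)"
proof -
  have [measurable]: "\<theta>' \<in> borel_measurable borel" by (rule borel_measurable_continuous_onI[OF cont])
  obtain K where K: "\<And>z. z \<in> {0..1} \<Longrightarrow> \<bar>\<theta>' z\<bar> \<le> K"
    using continuous_on_compact_abs_bound[OF continuous_on_subset[OF cont] compact_Icc] by blast
  moreover have "0 \<le> K" using K[of 0] by simp
  ultimately have bound: "\<bar>indicator {0<..<1} z * \<theta>' z\<bar> \<le> K" for z :: real
    by (auto simp: indicator_def)
  have i01: "integrable lborel (indicator {0<..<1::real} :: real \<Rightarrow> real)"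
    by (simp add: integrable_indicator_iff)
  have "integrable lborel (\<lambda>z. indicator {0<..<1} z * (indicator {0<..<1} z * \<theta>' z))"
    by (rule integrable_mult_bounded[OF i01 _ bound]) simp
  moreover have "(\<lambda>z. indicator {0<..<1} z * (indicator {0<..<1} z * \<theta>' z))
      = (\<lambda>z. indicator {0<..<1::real} z * \<theta>' z)"
    by (auto simp: fun_eq_iff indicator_def)
  ultimately have i1: "integrable lborel (\<lambda>z. indicator {0<..<1} z * \<theta>' z)" by simp
  have i2: "integrable lborel (\<lambda>z. indicator {0<..<1} z * \<theta>' z * primitive x z)"
    by (rule integrable_mult_bounded[OF i1 _ abs_primitive_le[OF x(1)]]) simp
  have g_line: "integrable lborel (\<lambda>s. g (x, s))" using x(1) by (simp add: good_line_def)
  have "(\<integral>z. indicator (G \<times> {0<..<1}) (x, z) * rep (x, z) * \<theta>' z \<partial>lborel)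
      = (\<integral>z. trace_val x * (indicator {0<..<1} z * \<theta>' z)
             + indicator {0<..<1} z * \<theta>' z * primitive x z \<partial>lborel)"
    using x(2) by (intro Bochner_Integration.integral_cong) (auto simp: rep_def indicator_def algebra_simps)
  also have "\<dots> = trace_val x * (\<integral>z. indicator {0<..<1} z * \<theta>' z \<partial>lborel)
      + (\<integral>z. indicator {0<..<1} z * \<theta>' z * primitive x z \<partial>lborel)"
    using i1 i2 by simp
  also have "(\<integral>z. indicator {0<..<1} z * \<theta>' z * primitive x z \<partial>lborel)
      = (\<integral>z. indicator {0<..<1} z * (\<integral>s. indicator {0..<z} s * g (x, s) \<partial>lborel) * \<theta>' z \<partial>lborel)"
    by (simp add: primitive_def mult_ac)
  also have "(\<integral>z. indicator {0<..<1} z * \<theta>' z \<partial>lborel) = 0"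
    using integral_Ioo_deriv[OF \<theta>' cont, of 0 1] vanish[of 0] vanish[of 1] by simp
  also have "(\<integral>z. indicator {0<..<1} z * (\<integral>s. indicator {0..<z} s * g (x, s) \<partial>lborel) * \<theta>' z \<partial>lborel)
      = - (\<integral>s. g (x, s) * \<theta> s \<partial>lborel)"
    by (rule integral_primitive_mult_deriv[OF g_line \<theta>' cont vanish])
  finally show ?thesis by simp
qed

lemma integral_rep_mult_deriv:
  fixes P :: "'a \<Rightarrow> real" and \<theta> \<theta>' :: "real \<Rightarrow> real"
  assumes P_borel [measurable]: "P \<in> borel_measurable borel" and P: "\<And>x. \<bar>P x\<bar> \<le> 1"
    and \<theta>': "\<And>z. (\<theta> has_real_derivative \<theta>' z) (at z)" and cont: "continuous_on UNIV \<theta>'"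
    and vanish: "\<And>z. z \<notin> {0<..<1} \<Longrightarrow> \<theta> z = 0" and vanish': "\<And>z. z \<notin> {0..1} \<Longrightarrow> \<theta>' z = 0"
  shows "(\<integral>p. indicator (G \<times> {0<..<1}) p * rep p * (P (fst p) * \<theta>' (snd p)) \<partial>lborel)
    = - (\<integral>p. g p * (P (fst p) * \<theta> (snd p)) \<partial>lborel)"
proof -
  have \<theta>c: "continuous_on UNIV \<theta>"
    using \<theta>' DERIV_isCont continuous_at_imp_continuous_on by blast
  have [measurable]: "\<theta> \<in> borel_measurable borel" "\<theta>' \<in> borel_measurable borel"
    using \<theta>c cont by (auto intro: borel_measurable_continuous_onI)
  let ?rep = "\<lambda>p. indicator (G \<times> {0<..<1}) p * rep p"
  have "integrable lborel (\<lambda>p. ?rep p * (P (fst p) * \<theta>' (snd p)))"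
    by (rule integrable_mult_tensor[OF rep_integrable_on_Omega _ P cont vanish']) simp
  then have "(\<integral>p. ?rep p * (P (fst p) * \<theta>' (snd p)) \<partial>lborel)
      = (\<integral>x. (\<integral>z. ?rep (x, z) * (P x * \<theta>' z) \<partial>lborel) \<partial>lborel)"
    by (simp add: integral_lborel_pair_lines)
  also have "\<dots> = (\<integral>x. - (\<integral>z. g (x, z) * (P x * \<theta> z) \<partial>lborel) \<partial>lborel)"
  proof (rule integral_cong_AE)
    show "(\<lambda>x. \<integral>z. ?rep (x, z) * (P x * \<theta>' z) \<partial>lborel) \<in> borel_measurable lborel"
      using borel_measurable_integral_snd[of "\<lambda>p. ?rep p * (P (fst p) * \<theta>' (snd p))"] by simp
    show "(\<lambda>x. - (\<integral>z. g (x, z) * (P x * \<theta> z) \<partial>lborel)) \<in> borel_measurable lborel"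
      using borel_measurable_integral_snd[of "\<lambda>p. g p * (P (fst p) * \<theta> (snd p))"] by simp
    show "AE x in lborel. (\<integral>z. ?rep (x, z) * (P x * \<theta>' z) \<partial>lborel)
        = - (\<integral>z. g (x, z) * (P x * \<theta> z) \<partial>lborel)"
      using AE_good_line
    proof eventually_elim
      case (elim x)
      show ?case
      proof (cases "x \<in> G")
        case True
        have "(\<lambda>z. ?rep (x, z) * (P x * \<theta>' z))
            = (\<lambda>z. P x * (indicator (G \<times> {0<..<1}) (x, z) * rep (x, z) * \<theta>' z))"
          by (simp add: fun_eq_iff)
        then have "(\<integral>z. ?rep (x, z) * (P x * \<theta>' z) \<partial>lborel)
            = P x * (\<integral>z. indicator (G \<times> {0<..<1}) (x, z) * rep (x, z) * \<theta>' z \<partial>lborel)"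
          by simp
        also have "\<dots> = - (P x * (\<integral>z. g (x, z) * \<theta> z \<partial>lborel))"
          using line_integral_rep_mult_deriv[OF elim True \<theta>' cont vanish] by simp
        finally show ?thesis by (simp add: mult.commute mult.left_commute)
      qed (simp add: g_vanish_line)
    qed
  qed
  also have "\<dots> = - (\<integral>p. g p * (P (fst p) * \<theta> (snd p)) \<partial>lborel)"
  proof -
    have "z \<notin> {0..1} \<Longrightarrow> \<theta> z = 0" for z using vanish by auto
    from integrable_mult_tensor[OF g_integrable P_borel P \<theta>c this]
    show ?thesis by (simp add: integral_lborel_pair_lines)
  qed
  finally show ?thesis .
qed

lemma defect_orthogonal_deriv:
  fixes P :: "'a \<Rightarrow> real" and \<theta> \<theta>' :: "real \<Rightarrow> real"
  assumes P_borel [measurable]: "P \<in> borel_measurable borel" and P: "\<And>x. \<bar>P x\<bar> \<le> 1"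
    and \<theta>': "\<And>z. (\<theta> has_real_derivative \<theta>' z) (at z)" and cont: "continuous_on UNIV \<theta>'"
    and vanish: "\<And>z. z \<notin> {0<..<1} \<Longrightarrow> \<theta> z = 0" and vanish': "\<And>z. z \<notin> {0..1} \<Longrightarrow> \<theta>' z = 0"
    and weak: "(\<integral>p. u p * (P (fst p) * \<theta>' (snd p)) \<partial>lborel)
      = - (\<integral>p. g p * (P (fst p) * \<theta> (snd p)) \<partial>lborel)"
  shows "(\<integral>p. defect p * (P (fst p) * \<theta>' (snd p)) \<partial>lborel) = 0"
proof -
  have "defect = (\<lambda>p. u p - indicator (G \<times> {0<..<1}) p * rep p)"
    using u_vanish by (auto simp: defect_def fun_eq_iff indicator_def Omega2_def)
  moreover have "integrable lborel (\<lambda>p. u p * (P (fst p) * \<theta>' (snd p)))"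
    by (rule integrable_mult_tensor[OF u_integrable _ P cont vanish']) simp
  moreover have "integrable lborel (\<lambda>p. indicator (G \<times> {0<..<1}) p * rep p * (P (fst p) * \<theta>' (snd p)))"
    by (rule integrable_mult_tensor[OF rep_integrable_on_Omega _ P cont vanish']) simp
  ultimately show ?thesis
    using weak integral_rep_mult_deriv[OF P_borel P \<theta>' cont vanish vanish'] by (simp add: left_diff_distrib)
qed

lemma defect_orthogonal_bumps:
  assumes sub: "cbox a b \<subseteq> G" and \<alpha>: "0 < \<alpha>" and \<beta>: "\<beta> < 1"
  shows "(\<integral>p. defect p * (box_bump n a b (fst p) * bump n \<alpha> \<beta> (snd p)) \<partial>lborel) = 0"
proof -
  define C where "C = (\<integral>t. bump n \<alpha> \<beta> t \<partial>lborel)"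
  define h where "h z = bump n \<alpha> \<beta> z - C * mollifier z" for z
  obtain \<theta> m M where \<theta>: "real_smooth \<theta>" and m: "0 < m" and M: "M < 1"
    and supp: "\<And>z. \<theta> z \<noteq> 0 \<Longrightarrow> m < z \<and> z < M" and \<theta>': "\<And>z. (\<theta> has_real_derivative h z) (at z)"
    using bump_minus_mollifier_primitive[OF \<alpha> \<beta>, of n] unfolding h_def C_def by blast
  have h_cont: "continuous_on UNIV h"
    unfolding h_def[abs_def]
    by (intro continuous_on_diff continuous_on_mult continuous_on_const bump_continuous
        mollifier_continuous)
  have h_vanish: "z \<notin> {0..1} \<Longrightarrow> h z = 0" for z
    using bump_nonzero_imp[of n \<alpha> \<beta> z] mollifier_vanish[of z] \<alpha> \<beta> by (force simp: h_def)
  have \<theta>_vanish: "z \<notin> {0<..<1} \<Longrightarrow> \<theta> z = 0" for z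
    using supp[of z] m M by force
  let ?P = "box_bump n a b"
  have "cbox a b \<times> {m..M} \<subseteq> Omega2 G" using sub m M by (auto simp: Omega2_def)
  note test = test_fun_box_bump_times[OF \<theta> \<theta>' supp this, of n]
  have weak: "(\<integral>p. u p * (?P (fst p) * h (snd p)) \<partial>lborel) = - (\<integral>p. g p * (?P (fst p) * \<theta> (snd p)) \<partial>lborel)"
    using weak_dz_lborel[OF test(1)] by (simp add: test(2))
  have "(\<integral>p. defect p * (?P (fst p) * h (snd p)) \<partial>lborel) = 0"
    by (rule defect_orthogonal_deriv[OF box_bump_borel_measurable box_bump_abs_le_1 \<theta>' h_cont
          \<theta>_vanish h_vanish weak])
  moreover have "(\<integral>p. defect p * (?P (fst p) * mollifier (snd p)) \<partial>lborel) = 0"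
    by (rule defect_orthogonal_mollifier[OF box_bump_borel_measurable box_bump_abs_le_1])
  moreover have "integrable lborel (\<lambda>p. defect p * (?P (fst p) * h (snd p)))"
    by (rule integrable_mult_tensor[OF defect_integrable box_bump_borel_measurable box_bump_abs_le_1
          h_cont h_vanish])
  moreover have "integrable lborel (\<lambda>p. defect p * (?P (fst p) * mollifier (snd p)))"
    by (rule integrable_mult_tensor[OF defect_integrable box_bump_borel_measurable box_bump_abs_le_1
          mollifier_continuous mollifier_vanish_Icc])
  moreover have "(\<lambda>p. defect p * (?P (fst p) * bump n \<alpha> \<beta> (snd p)))
      = (\<lambda>p. defect p * (?P (fst p) * h (snd p)) + C * (defect p * (?P (fst p) * mollifier (snd p))))"
    by (simp add: h_def fun_eq_iff algebra_simps)
  ultimately show ?thesis by simp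
qed

lemma defect_orthogonal_boxes:
  assumes "cbox a b \<subseteq> G" and "0 < \<alpha>" and "\<beta> < 1"
  shows "(\<integral>p. indicator (box (a, \<alpha>) (b, \<beta>)) p * defect p \<partial>lborel) = 0"
proof -
  have "(\<lambda>n. \<integral>p. defect p * (box_bump n a b (fst p) * bump n \<alpha> \<beta> (snd p)) \<partial>lborel)
      \<longlonglongrightarrow> (\<integral>p. defect p * (indicator (box a b) (fst p) * indicator {\<alpha><..<\<beta>} (snd p)) \<partial>lborel)"
  proof (rule integral_dominated_convergence[where w="\<lambda>p. norm (defect p)"])
    show "AE p in lborel. (\<lambda>n. defect p * (box_bump n a b (fst p) * bump n \<alpha> \<beta> (snd p)))
        \<longlonglongrightarrow> defect p * (indicator (box a b) (fst p) * indicator {\<alpha><..<\<beta>} (snd p))"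
      by (intro AE_I2 tendsto_mult tendsto_const box_bump_tendsto_indicator bump_tendsto_indicator)
    show "AE p in lborel. norm (defect p * (box_bump n a b (fst p) * bump n \<alpha> \<beta> (snd p)))
        \<le> norm (defect p)" for n
    proof (intro AE_I2)
      fix p :: "'a \<times> real"
      have "\<bar>box_bump n a b (fst p) * bump n \<alpha> \<beta> (snd p)\<bar> \<le> 1 * 1"
        unfolding abs_mult
        by (intro mult_mono box_bump_abs_le_1) (auto simp: bump_nonneg bump_le_1)
      then show "norm (defect p * (box_bump n a b (fst p) * bump n \<alpha> \<beta> (snd p))) \<le> norm (defect p)"
        by (simp add: abs_mult mult_left_le)
    qed
  qed (use defect_integrable in auto)
  moreover have "(\<integral>p. defect p * (box_bump n a b (fst p) * bump n \<alpha> \<beta> (snd p)) \<partial>lborel) = 0" for n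
    using defect_orthogonal_bumps assms by blast
  ultimately have "(\<lambda>n. 0) \<longlonglongrightarrow>
      (\<integral>p. defect p * (indicator (box a b) (fst p) * indicator {\<alpha><..<\<beta>} (snd p)) \<partial>lborel)"
    by simp
  then have "(\<integral>p. defect p * (indicator (box a b) (fst p) * indicator {\<alpha><..<\<beta>} (snd p)) \<partial>lborel) = 0"
    using LIMSEQ_unique[OF tendsto_const] by metis
  moreover have "indicator (box (a, \<alpha>) (b, \<beta>)) p
      = (indicator (box a b) (fst p) * indicator {\<alpha><..<\<beta>} (snd p) :: real)"
    for p :: "'a \<times> real"
    by (cases p) (auto simp: box_Pair_eq indicator_def)
  ultimately show ?thesis by (simp add: mult.commute)
qed

lemma AE_u_eq_rep: "AE p in lborel. p \<in> G \<times> {0<..<1} \<longrightarrow> u p = rep p"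
proof -
  have "AE p in lborel. p \<in> G \<times> {0<..<1} \<longrightarrow> defect p = 0"
  proof (rule AE_zero_on_open_if_box_integrals_zero[OF defect_integrable])
    show "open (G \<times> {0<..<1::real})" using open_G by (intro open_Times) auto
    fix A B :: "'a \<times> real"
    assume sub: "cbox A B \<subseteq> G \<times> {0<..<1}"
    obtain a \<alpha> b \<beta> where AB: "A = (a, \<alpha>)" "B = (b, \<beta>)" by (cases A, cases B)
    show "(\<integral>p. indicator (box A B) p * defect p \<partial>lborel) = 0"
    proof (cases "cbox A B = {}")
      case False
      then obtain x0 where x0: "x0 \<in> cbox a b" and \<alpha>\<beta>: "\<alpha> \<le> \<beta>" by (auto simp: AB cbox_Pair_eq)
      have mem: "(x, z) \<in> G \<times> {0<..<1}" if "x \<in> cbox a b" "z \<in> {\<alpha>..\<beta>}" for x z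
        using subsetD[OF sub, of "(x, z)"] that by (simp add: AB cbox_Pair_eq)
      have "cbox a b \<subseteq> G" using mem[of _ \<alpha>] \<alpha>\<beta> by auto
      moreover have "0 < \<alpha>" "\<beta> < 1" using mem[OF x0, of \<alpha>] mem[OF x0, of \<beta>] \<alpha>\<beta> by auto
      ultimately show ?thesis unfolding AB by (rule defect_orthogonal_boxes)
    qed (use box_subset_cbox[of A B] in auto)
  qed
  then show ?thesis by eventually_elim (auto simp: defect_def)
qed

lemma rep_line_continuous: "good_line x \<Longrightarrow> continuous_on UNIV (\<lambda>z. rep (x, z))"
  unfolding rep_def by (auto intro!: continuous_on_add continuous_on_const primitive_continuous)

lemma rep_at_0: "rep (x, 0) = trace_val x"
  by (simp add: rep_def primitive_def)

lemma trace_val_vanish: "x \<notin> G \<Longrightarrow> trace_val x = 0"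
  by (simp add: trace_val_def primitive_def g_vanish_line u_vanish_line)

lemma AE_lines_u_eq_rep:
  "AE x in lborel. AE z in lborel. (x, z) \<in> G \<times> {0<..<1} \<longrightarrow> u (x, z) = rep (x, z)"
proof -
  have "AE p in lborel \<Otimes>\<^sub>M lborel. p \<in> G \<times> {0<..<1} \<longrightarrow> u p = rep p"
    unfolding lborel_prod by (rule AE_u_eq_rep)
  from lborel_pair.AE_pair[OF this] show ?thesis by simp
qed

lemma is_trace_trace_val: "is_trace G u trace_val"
  unfolding is_trace_def
proof (intro exI conjI)
  show "AE p in lebesgue. p \<in> Omega2 G \<longrightarrow> rep p = u p"
    using AE_u_eq_rep by (auto simp: AE_completion_iff Omega2_def elim: eventually_mono)
  have "AE x in lborel. x \<in> G \<longrightarrow> continuous_on {0..<1} (\<lambda>z. rep (x, z)) \<and> trace_val x = rep (x, 0)"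
    using AE_good_line
    by eventually_elim (auto simp: rep_at_0 intro: continuous_on_subset[OF rep_line_continuous])
  then show "AE x in lebesgue. x \<in> G \<longrightarrow>
      continuous_on {0..<1} (\<lambda>z. rep (x, z)) \<and> trace_val x = rep (x, 0)"
    by (simp add: AE_completion_iff)
qed

lemma is_trace_imp_AE_eq_trace_val:
  assumes "is_trace G u t"
  shows "AE x in lborel. x \<in> G \<longrightarrow> t x = trace_val x"
proof -
  obtain v where v_eq: "AE p in lebesgue. p \<in> Omega2 G \<longrightarrow> v p = u p"
    and v_line: "AE x in lebesgue. x \<in> G \<longrightarrow> continuous_on {0..<1} (\<lambda>z. v (x, z)) \<and> t x = v (x, 0)"
    using assms unfolding is_trace_def by blast
  have "AE p in lborel. p \<in> G \<times> {0<..<1} \<longrightarrow> v p = rep p"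
    using v_eq AE_u_eq_rep by (auto simp: AE_completion_iff Omega2_def)
  then have "AE p in lborel \<Otimes>\<^sub>M lborel. p \<in> G \<times> {0<..<1} \<longrightarrow> v p = rep p"
    by (simp only: lborel_prod)
  from lborel_pair.AE_pair[OF this]
  have "AE x in lborel. AE z in lborel. (x, z) \<in> G \<times> {0<..<1} \<longrightarrow> v (x, z) = rep (x, z)"
    by simp
  then show ?thesis using v_line[unfolded AE_completion_iff] AE_good_line
  proof eventually_elim
    case (elim x)
    show ?case
    proof
      assume x: "x \<in> G"
      have "AE z in lborel. z \<in> {0<..<1} \<longrightarrow> v (x, z) = rep (x, z)"
        using elim(1) x by (auto elim: eventually_mono)
      then have "v (x, 0) = rep (x, 0)"
        using elim(2) x continuous_on_subset[OF rep_line_continuous[OF elim(3)]]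
        by (intro continuous_on_AE_eq_imp_eq_left) auto
      then show "t x = trace_val x" using elim(2) x by (simp add: rep_at_0)
    qed
  qed
qed

definition u_line_sq :: "'a \<Rightarrow> real" where
  "u_line_sq x = (\<integral>z. (u (x, z))\<^sup>2 \<partial>lborel)"

definition g_line_sq :: "'a \<Rightarrow> real" where
  "g_line_sq x = (\<integral>z. (g (x, z))\<^sup>2 \<partial>lborel)"

lemma u_line_sq_integrable: "integrable lborel u_line_sq"
  and g_line_sq_integrable: "integrable lborel g_line_sq"
  unfolding u_line_sq_def[abs_def] g_line_sq_def[abs_def]
  using lborel_pair.integrable_fst'[OF integrable_lborel_pair[OF u_square_integrable]]
    lborel_pair.integrable_fst'[OF integrable_lborel_pair[OF g_square_integrable]]
  by simp_all

lemma integral_u_line_sq: "(\<integral>x. u_line_sq x \<partial>lborel) = (\<integral>p. (u p)\<^sup>2 \<partial>lborel)"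
  and integral_g_line_sq: "(\<integral>x. g_line_sq x \<partial>lborel) = (\<integral>p. (g p)\<^sup>2 \<partial>lborel)"
  unfolding u_line_sq_def g_line_sq_def
  using integral_lborel_pair_lines[OF u_square_integrable]
    integral_lborel_pair_lines[OF g_square_integrable]
  by simp_all

lemma u_line_sq_nonneg: "0 \<le> u_line_sq x" and g_line_sq_nonneg: "0 \<le> g_line_sq x"
  by (simp_all add: u_line_sq_def g_line_sq_def)

lemma abs_trace_val_le:
  assumes x: "good_line x" "x \<in> G"
    and ae: "AE z in lborel. (x, z) \<in> G \<times> {0<..<1} \<longrightarrow> u (x, z) = rep (x, z)"
  shows "\<bar>trace_val x\<bar> \<le> (\<integral>z. \<bar>u (x, z)\<bar> \<partial>lborel) + line_l1 x"
proof -
  have u_line: "integrable lborel (\<lambda>z. u (x, z))" using x(1) by (simp add: good_line_def)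
  have i01: "integrable lborel (indicator {0<..<1::real} :: real \<Rightarrow> real)"
    by (simp add: integrable_indicator_iff)
  have "\<bar>trace_val x\<bar> = (\<integral>z. indicator {0<..<1::real} z * \<bar>trace_val x\<bar> \<partial>lborel)"
    by simp
  also have "\<dots> \<le> (\<integral>z. \<bar>u (x, z)\<bar> + indicator {0<..<1::real} z * line_l1 x \<partial>lborel)"
  proof (rule integral_mono_AE)
    show "AE z in lborel. indicator {0<..<1::real} z * \<bar>trace_val x\<bar>
        \<le> \<bar>u (x, z)\<bar> + indicator {0<..<1::real} z * line_l1 x"
      using ae
    proof eventually_elim
      case (elim z)
      show ?case
      proof (cases "z \<in> {0<..<1}")
        case True
        then have "u (x, z) = trace_val x + primitive x z" using elim x(2) by (simp add: rep_def)
        then show ?thesis using True abs_primitive_le[OF x(1), of z] by simp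
      qed simp
    qed
  qed (use u_line i01 in auto)
  also have "\<dots> = (\<integral>z. \<bar>u (x, z)\<bar> \<partial>lborel) + line_l1 x"
    using u_line i01 by simp
  finally show ?thesis .
qed

lemma trace_line_estimates:
  assumes x: "good_line x" "x \<in> G"
    and ae: "AE z in lborel. (x, z) \<in> G \<times> {0<..<1} \<longrightarrow> u (x, z) = rep (x, z)"
  shows "(trace_val x)\<^sup>2 \<le> 2 * (u_line_sq x + g_line_sq x)"
    and "u_line_sq x \<le> 2 * ((trace_val x)\<^sup>2 + g_line_sq x)"
proof -
  have u_line: "integrable lborel (\<lambda>z. u (x, z))" "integrable lborel (\<lambda>z. (u (x, z))\<^sup>2)"
    and g_line: "integrable lborel (\<lambda>z. g (x, z))" "integrable lborel (\<lambda>z. (g (x, z))\<^sup>2)"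
    using x(1) by (auto simp: good_line_def)
  have l1_sq: "(line_l1 x)\<^sup>2 \<le> g_line_sq x"
    unfolding line_l1_def g_line_sq_def
    by (rule integral_abs_power2_le_integral_power2[OF g_line]) (simp add: g_vanish_line)
  have "(\<integral>z. \<bar>u (x, z)\<bar> \<partial>lborel)\<^sup>2 \<le> u_line_sq x"
    unfolding u_line_sq_def
    by (rule integral_abs_power2_le_integral_power2[OF u_line]) (simp add: u_vanish_line)
  moreover have "\<bar>trace_val x\<bar>\<^sup>2 \<le> ((\<integral>z. \<bar>u (x, z)\<bar> \<partial>lborel) + line_l1 x)\<^sup>2"
    by (rule power_mono[OF abs_trace_val_le[OF x ae]]) simp
  ultimately show "(trace_val x)\<^sup>2 \<le> 2 * (u_line_sq x + g_line_sq x)"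
    using power2_add_le_2_sum_squares[of "\<integral>z. \<bar>u (x, z)\<bar> \<partial>lborel" "line_l1 x"] l1_sq by simp
  have "u_line_sq x \<le> (\<integral>z. indicator {0<..<1::real} z * (2 * ((trace_val x)\<^sup>2 + (line_l1 x)\<^sup>2)) \<partial>lborel)"
    unfolding u_line_sq_def
  proof (rule integral_mono_AE)
    show "AE z in lborel. (u (x, z))\<^sup>2 \<le> indicator {0<..<1::real} z * (2 * ((trace_val x)\<^sup>2 + (line_l1 x)\<^sup>2))"
      using ae
    proof eventually_elim
      case (elim z)
      show ?case
      proof (cases "z \<in> {0<..<1}")
        case True
        then have "u (x, z) = trace_val x + primitive x z" using elim x(2) by (simp add: rep_def)
        moreover have "(primitive x z)\<^sup>2 \<le> (line_l1 x)\<^sup>2"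
          using power_mono[OF abs_primitive_le[OF x(1), of z] abs_ge_zero, of 2] by simp
        ultimately show ?thesis
          using True power2_add_le_2_sum_squares[of "trace_val x" "primitive x z"] by simp
      qed (simp add: u_vanish_line)
    qed
  qed (use u_line in \<open>auto simp: integrable_indicator_iff\<close>)
  also have "\<dots> = 2 * ((trace_val x)\<^sup>2 + (line_l1 x)\<^sup>2)" by simp
  finally show "u_line_sq x \<le> 2 * ((trace_val x)\<^sup>2 + g_line_sq x)" using l1_sq by simp
qed

lemma AE_trace_line_estimates:
  "AE x in lborel. (trace_val x)\<^sup>2 \<le> 2 * (u_line_sq x + g_line_sq x)
     \<and> u_line_sq x \<le> 2 * ((trace_val x)\<^sup>2 + g_line_sq x)"
  using AE_good_line AE_lines_u_eq_rep
proof eventually_elim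
  case (elim x)
  show ?case
  proof (cases "x \<in> G")
    case True
    show ?thesis using trace_line_estimates[OF elim(1) True elim(2)] by simp
  next
    case False
    then show ?thesis
      using g_line_sq_nonneg[of x] by (simp add: trace_val_vanish u_line_sq_def u_vanish_line)
  qed
qed

lemma trace_val_square_integrable: "integrable lborel (\<lambda>x. (trace_val x)\<^sup>2)"
proof (rule Bochner_Integration.integrable_bound[where f="\<lambda>x. 2 * (u_line_sq x + g_line_sq x)"])
  show "integrable lborel (\<lambda>x. 2 * (u_line_sq x + g_line_sq x))"
    using u_line_sq_integrable g_line_sq_integrable by simp
  show "AE x in lborel. norm ((trace_val x)\<^sup>2) \<le> norm (2 * (u_line_sq x + g_line_sq x))"
    using AE_trace_line_estimates
    by eventually_elim (use u_line_sq_nonneg g_line_sq_nonneg in auto)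
qed simp

lemma integral_trace_val_square_le:
  "(\<integral>x. (trace_val x)\<^sup>2 \<partial>lborel) \<le> 2 * ((\<integral>p. (u p)\<^sup>2 \<partial>lborel) + (\<integral>p. (g p)\<^sup>2 \<partial>lborel))"
proof -
  have "(\<integral>x. (trace_val x)\<^sup>2 \<partial>lborel) \<le> (\<integral>x. 2 * (u_line_sq x + g_line_sq x) \<partial>lborel)"
    using AE_trace_line_estimates u_line_sq_integrable g_line_sq_integrable
    by (intro integral_mono_AE trace_val_square_integrable) (auto elim: eventually_mono)
  then show ?thesis
    using u_line_sq_integrable g_line_sq_integrable
    by (simp add: integral_u_line_sq integral_g_line_sq)
qed

lemma integral_u_square_le:
  "(\<integral>p. (u p)\<^sup>2 \<partial>lborel) \<le> 2 * ((\<integral>x. (trace_val x)\<^sup>2 \<partial>lborel) + (\<integral>p. (g p)\<^sup>2 \<partial>lborel))"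
proof -
  have "(\<integral>x. u_line_sq x \<partial>lborel) \<le> (\<integral>x. 2 * ((trace_val x)\<^sup>2 + g_line_sq x) \<partial>lborel)"
    using AE_trace_line_estimates trace_val_square_integrable g_line_sq_integrable
    by (intro integral_mono_AE u_line_sq_integrable) (auto elim: eventually_mono)
  then show ?thesis
    using trace_val_square_integrable g_line_sq_integrable
    by (simp add: integral_u_line_sq integral_g_line_sq)
qed

lemma trace_L2_estimates:
  assumes "is_trace G u t"
  shows "in_L2 G t \<and> L2_norm G t \<le> sqrt 2 * (L2_norm (Omega2 G) u + L2_norm (Omega2 G) g)
    \<and> L2_norm (Omega2 G) u \<le> sqrt 2 * (L2_norm (Omega2 G) g + L2_norm G t)"
proof -
  have ae: "AE x in lebesgue. x \<in> G \<longrightarrow> t x = trace_val x"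
    using is_trace_imp_AE_eq_trace_val[OF assms] by (simp add: AE_completion_iff)
  have "in_L2 G t" "L2_norm G t = sqrt (\<integral>x. (trace_val x)\<^sup>2 \<partial>lborel)"
    using in_L2_cong_AE[OF ae] L2_norm_cong_AE[OF ae] trace_val_square_integrable
      in_L2_iff_lborel[OF trace_val_borel_measurable trace_val_vanish]
      L2_norm_eq_lborel[OF trace_val_borel_measurable trace_val_vanish]
    by simp_all
  moreover have "L2_norm (Omega2 G) u = sqrt (\<integral>p. (u p)\<^sup>2 \<partial>lborel)"
    "L2_norm (Omega2 G) g = sqrt (\<integral>p. (g p)\<^sup>2 \<partial>lborel)"
    by (simp_all add: L2_norm_eq_lborel u_vanish g_vanish)
  ultimately show ?thesis
    using sqrt_le_sqrt_2_mult_add[OF integral_trace_val_square_le]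
      sqrt_le_sqrt_2_mult_add[OF integral_u_square_le]
    by (simp add: add.commute)
qed

end

theorem lemma4:
  fixes G :: "'a::euclidean_space set" and u g :: "'a \<times> real \<Rightarrow> real"
  assumes "bounded G" and "lipschitz_domain G"
    and "H_dz G u g"
  shows "(\<exists>t. is_trace G u t)
     \<and> (\<forall>t1 t2. is_trace G u t1 \<longrightarrow> is_trace G u t2 \<longrightarrow> (AE x in lebesgue. x \<in> G \<longrightarrow> t1 x = t2 x))
     \<and> (\<forall>t. is_trace G u t \<longrightarrow> in_L2 G t
          \<and> L2_norm G t \<le> sqrt 2 * (L2_norm (Omega2 G) u + L2_norm (Omega2 G) g)
          \<and> L2_norm (Omega2 G) u \<le> sqrt 2 * (L2_norm (Omega2 G) g + L2_norm G t))"
proof -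
  have "open G" using assms(2) by (simp add: lipschitz_domain_def)
  then have \<Omega>: "Omega2 G \<in> sets borel" unfolding Omega2_def by (intro borel_open open_Times) auto
  obtain u0 where u0: "u0 \<in> borel_measurable borel" "\<And>p. p \<notin> Omega2 G \<Longrightarrow> u0 p = 0"
    and u_u0: "AE p in lebesgue. p \<in> Omega2 G \<longrightarrow> u p = u0 p"
    using in_L2_borel_representative[OF \<Omega>] assms(3) by (auto simp: H_dz_def)
  obtain g0 where g0: "g0 \<in> borel_measurable borel" "\<And>p. p \<notin> Omega2 G \<Longrightarrow> g0 p = 0"
    and g_g0: "AE p in lebesgue. p \<in> Omega2 G \<longrightarrow> g p = g0 p"
    using in_L2_borel_representative[OF \<Omega>] assms(3) by (auto simp: H_dz_def)
  interpret dz_setting G u0 g0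
    using \<open>open G\<close> assms(1,3) u0 g0 H_dz_cong_AE[OF u_u0 g_g0] by unfold_locales auto
  have "is_trace G u = is_trace G u0" using is_trace_cong_AE[OF u_u0] by blast
  moreover have "L2_norm (Omega2 G) u = L2_norm (Omega2 G) u0"
    "L2_norm (Omega2 G) g = L2_norm (Omega2 G) g0"
    using L2_norm_cong_AE u_u0 g_g0 by blast+
  moreover have "AE x in lebesgue. x \<in> G \<longrightarrow> t1 x = t2 x"
    if "is_trace G u0 t1" "is_trace G u0 t2" for t1 t2
    using is_trace_imp_AE_eq_trace_val[OF that(1)] is_trace_imp_AE_eq_trace_val[OF that(2)]
    by (auto simp: AE_completion_iff elim: AE_mp)
  ultimately show ?thesis using is_trace_trace_val trace_L2_estimates by auto
qed

end
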